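(* Let $\pi=(O,h)$, $O=(C,E,G)$, be the complete prefix unfolding of a net system $S$ and let $t_1,t_2$ be transitions of $S$. Consider the procedure CheckByCuts$(t_1,t_2)$: for each event $e_1\in E$ with $h(e_1)=t_1$, let $B_{prec}=e_1\bullet\cup\{c\in C\mid c\text{ co }e_1,\ h(c)\in\bullet t_2\}$, let $Q$ be the set of all cuts of $B_{prec}$ (subsets of $B_{prec}$ whose conditions are pairwise in co and which are maximal with this property w.r.t. inclusion within $B_{prec}$), and return true if some $X'\in Q$ satisfies $\bullet t_2\subseteq h(X')$; if no $e_1$ leads to a return of true, return false. Then CheckByCuts$(t_1,t_2)$ returns true if and only if $t_1<_{tar}t_2$.
   Context: Petri net $N=(P,T,F)$ with pre/post-sets $\bullet x$, $x\bullet$; markings, enabling (every input place marked) and firing $M'=M-\bullet t+t\bullet$ as usual; net system $S=(N,M_0)$. Transition adjacency relation: $t_1<_{tar}t_2$ iff there is a reachable marking $M_s$ of $S$ enabling $t_1$ such that after firing $t_1$ from $M_s$, $t_2$ is enabled. For nodes of an occurrence net: $x<y$ iff there is a directed path with at least one arc from $x$ to $y$; $x\#y$ iff there are a condition $s$ and paths $s\,t_1\cdots x$, $s\,t_2\cdots y$ with $t_1\neq t_2$; $x$ co $y$ iff none of $x<y,y<x,x\#y$ (this applies also between a condition and an event). The branching process $\pi=(O,h)$ ($h$ maps conditions to places and events to transitions), configurations, cut-off events w.r.t. an adequate order, and the complete prefix unfolding (greatest backward closed subnet of the unfolding containing no event after a cut-off event) are as in McMillan/Esparza unfolding theory. *)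

theory Defs
  imports Main
begin

definition preset :: "('a \<times> 'a) set \<Rightarrow> 'a \<Rightarrow> 'a set" where
  "preset F x = {y. (y, x) \<in> F}"

definition postset :: "('a \<times> 'a) set \<Rightarrow> 'a \<Rightarrow> 'a set" where
  "postset F x = {y. (x, y) \<in> F}"

definition net_system :: "'a set \<Rightarrow> 'a set \<Rightarrow> ('a \<times> 'a) set \<Rightarrow> ('a \<Rightarrow> nat) \<Rightarrow> bool" where
  "net_system P T F M0 \<longleftrightarrow>
     P \<inter> T = {} \<and> F \<subseteq> (P \<times> T) \<union> (T \<times> P) \<and> finite P \<and> finite T \<and>
     (\<forall>t\<in>T. preset F t \<noteq> {}) \<and> (\<forall>p. p \<notin> P \<longrightarrow> M0 p = 0)"

definition enabled :: "('a \<times> 'a) set \<Rightarrow> ('a \<Rightarrow> nat) \<Rightarrow> 'a \<Rightarrow> bool" where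
  "enabled F M t \<longleftrightarrow> (\<forall>p\<in>preset F t. 0 < M p)"

definition fire :: "('a \<times> 'a) set \<Rightarrow> ('a \<Rightarrow> nat) \<Rightarrow> 'a \<Rightarrow> ('a \<Rightarrow> nat)" where
  "fire F M t = (\<lambda>p. M p - (if p \<in> preset F t then 1 else 0)
                      + (if p \<in> postset F t then 1 else 0))"

inductive_set reach :: "'a set \<Rightarrow> ('a \<times> 'a) set \<Rightarrow> ('a \<Rightarrow> nat) \<Rightarrow> ('a \<Rightarrow> nat) set"
  for T F M0 where
  init: "M0 \<in> reach T F M0"
| step: "M \<in> reach T F M0 \<Longrightarrow> t \<in> T \<Longrightarrow> enabled F M t \<Longrightarrow> fire F M t \<in> reach T F M0"

definition tar :: "'a set \<Rightarrow> ('a \<times> 'a) set \<Rightarrow> ('a \<Rightarrow> nat) \<Rightarrow> 'a \<Rightarrow> 'a \<Rightarrow> bool" where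
  "tar T F M0 t1 t2 \<longleftrightarrow>
     t1 \<in> T \<and> t2 \<in> T \<and>
     (\<exists>Ms \<in> reach T F M0. enabled F Ms t1 \<and> enabled F (fire F Ms t1) t2)"

definition conflict :: "'n set \<Rightarrow> ('n \<times> 'n) set \<Rightarrow> 'n \<Rightarrow> 'n \<Rightarrow> bool" where
  "conflict C G x y \<longleftrightarrow>
     (\<exists>s\<in>C. \<exists>u1 u2. u1 \<noteq> u2 \<and> (s, u1) \<in> G \<and> (s, u2) \<in> G \<and>
                    (u1, x) \<in> G\<^sup>* \<and> (u2, y) \<in> G\<^sup>*)"

definition co :: "'n set \<Rightarrow> ('n \<times> 'n) set \<Rightarrow> 'n \<Rightarrow> 'n \<Rightarrow> bool" where
  "co C G x y \<longleftrightarrow> (x, y) \<notin> G\<^sup>+ \<and> (y, x) \<notin> G\<^sup>+ \<and> \<not> conflict C G x y"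

definition coset :: "'n set \<Rightarrow> ('n \<times> 'n) set \<Rightarrow> 'n set \<Rightarrow> bool" where
  "coset C G X \<longleftrightarrow> (\<forall>x\<in>X. \<forall>y\<in>X. x \<noteq> y \<longrightarrow> co C G x y)"

definition occurrence_net :: "'n set \<Rightarrow> 'n set \<Rightarrow> ('n \<times> 'n) set \<Rightarrow> bool" where
  "occurrence_net C E G \<longleftrightarrow>
     C \<inter> E = {} \<and> G \<subseteq> (C \<times> E) \<union> (E \<times> C) \<and>
     (\<forall>c\<in>C. \<forall>e1 e2. (e1, c) \<in> G \<and> (e2, c) \<in> G \<longrightarrow> e1 = e2) \<and>
     (\<forall>x. (x, x) \<notin> G\<^sup>+) \<and>
     (\<forall>x\<in>C \<union> E. finite {y. (y, x) \<in> G\<^sup>+}) \<and>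
     (\<forall>x\<in>C \<union> E. \<not> conflict C G x x)"

definition min_conds :: "'n set \<Rightarrow> ('n \<times> 'n) set \<Rightarrow> 'n set" where
  "min_conds C G = {c\<in>C. preset G c = {}}"

definition branching_process ::
  "'a set \<Rightarrow> 'a set \<Rightarrow> ('a \<times> 'a) set \<Rightarrow> ('a \<Rightarrow> nat) \<Rightarrow>
   'n set \<Rightarrow> 'n set \<Rightarrow> ('n \<times> 'n) set \<Rightarrow> ('n \<Rightarrow> 'a) \<Rightarrow> bool" where
  "branching_process P T F M0 C E G h \<longleftrightarrow>
     occurrence_net C E G \<and> h ` C \<subseteq> P \<and> h ` E \<subseteq> T \<and>
     (\<forall>e\<in>E. bij_betw h (preset G e) (preset F (h e)) \<and>
             bij_betw h (postset G e) (postset F (h e))) \<and>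
     finite (min_conds C G) \<and>
     (\<forall>p. card {c \<in> min_conds C G. h c = p} = M0 p) \<and>
     (\<forall>e1\<in>E. \<forall>e2\<in>E. preset G e1 = preset G e2 \<and> h e1 = h e2 \<longrightarrow> e1 = e2)"

definition is_unfolding ::
  "'a set \<Rightarrow> 'a set \<Rightarrow> ('a \<times> 'a) set \<Rightarrow> ('a \<Rightarrow> nat) \<Rightarrow>
   'n set \<Rightarrow> 'n set \<Rightarrow> ('n \<times> 'n) set \<Rightarrow> ('n \<Rightarrow> 'a) \<Rightarrow> bool" where
  "is_unfolding P T F M0 C E G h \<longleftrightarrow>
     branching_process P T F M0 C E G h \<and>
     (\<forall>B t. B \<subseteq> C \<and> coset C G B \<and> t \<in> T \<and> bij_betw h B (preset F t) \<longrightarrow>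
            (\<exists>e\<in>E. preset G e = B \<and> h e = t))"

definition configuration :: "'n set \<Rightarrow> 'n set \<Rightarrow> ('n \<times> 'n) set \<Rightarrow> 'n set \<Rightarrow> bool" where
  "configuration C E G X \<longleftrightarrow>
     X \<subseteq> E \<and> (\<forall>e\<in>X. \<forall>e'\<in>E. (e', e) \<in> G\<^sup>+ \<longrightarrow> e' \<in> X) \<and>
     (\<forall>e\<in>X. \<forall>e'\<in>X. \<not> conflict C G e e')"

definition local_config :: "'n set \<Rightarrow> ('n \<times> 'n) set \<Rightarrow> 'n \<Rightarrow> 'n set" where
  "local_config E G e = {e'\<in>E. (e', e) \<in> G\<^sup>*}"

definition cut :: "'n set \<Rightarrow> ('n \<times> 'n) set \<Rightarrow> 'n set \<Rightarrow> 'n set" where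
  "cut C G X = (min_conds C G \<union> (\<Union>e\<in>X. postset G e)) - (\<Union>e\<in>X. preset G e)"

definition mark :: "'n set \<Rightarrow> ('n \<times> 'n) set \<Rightarrow> ('n \<Rightarrow> 'a) \<Rightarrow> 'n set \<Rightarrow> ('a \<Rightarrow> nat)" where
  "mark C G h X = (\<lambda>p. card {c \<in> cut C G X. h c = p})"

definition future :: "'n set \<Rightarrow> 'n set \<Rightarrow> ('n \<times> 'n) set \<Rightarrow> 'n set \<Rightarrow> 'n set" where
  "future C E G X =
     {x \<in> C \<union> E. x \<notin> X \<and> x \<notin> (\<Union>e\<in>X. preset G e) \<and> (\<forall>e\<in>X. \<not> conflict C G x e)}"

definition future_iso ::
  "'n set \<Rightarrow> 'n set \<Rightarrow> ('n \<times> 'n) set \<Rightarrow> ('n \<Rightarrow> 'a) \<Rightarrow> 'n set \<Rightarrow> 'n set \<Rightarrow> ('n \<Rightarrow> 'n) \<Rightarrow> bool" where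
  "future_iso C E G h X1 X2 I \<longleftrightarrow>
     bij_betw I (future C E G X1) (future C E G X2) \<and>
     (\<forall>x\<in>future C E G X1. (x \<in> E \<longleftrightarrow> I x \<in> E) \<and> h (I x) = h x) \<and>
     (\<forall>x\<in>future C E G X1. \<forall>y\<in>future C E G X1. (x, y) \<in> G \<longleftrightarrow> (I x, I y) \<in> G)"

definition adequate_order ::
  "'n set \<Rightarrow> 'n set \<Rightarrow> ('n \<times> 'n) set \<Rightarrow> ('n \<Rightarrow> 'a) \<Rightarrow> ('n set \<Rightarrow> 'n set \<Rightarrow> bool) \<Rightarrow> bool" where
  "adequate_order C E G h lt \<longleftrightarrow>
     (let fc = (\<lambda>X. configuration C E G X \<and> finite X) in
       (\<forall>X. fc X \<longrightarrow> \<not> lt X X) \<and>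
       (\<forall>X Y Z. fc X \<and> fc Y \<and> fc Z \<and> lt X Y \<and> lt Y Z \<longrightarrow> lt X Z) \<and>
       wfp (\<lambda>X Y. fc X \<and> fc Y \<and> lt X Y) \<and>
       (\<forall>X Y. fc X \<and> fc Y \<and> X \<subset> Y \<longrightarrow> lt X Y) \<and>
       (\<forall>X1 X2 I Ex. fc X1 \<and> fc X2 \<and> lt X1 X2 \<and> mark C G h X1 = mark C G h X2 \<and>
          future_iso C E G h X1 X2 I \<and> Ex \<inter> X1 = {} \<and> fc (X1 \<union> Ex) \<longrightarrow>
          lt (X1 \<union> Ex) (X2 \<union> I ` Ex)))"

definition cutoff ::
  "'n set \<Rightarrow> 'n set \<Rightarrow> ('n \<times> 'n) set \<Rightarrow> ('n \<Rightarrow> 'a) \<Rightarrow> ('n set \<Rightarrow> 'n set \<Rightarrow> bool) \<Rightarrow> 'n \<Rightarrow> bool" where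
  "cutoff C E G h lt e \<longleftrightarrow>
     e \<in> E \<and> (\<exists>e'\<in>E. mark C G h (local_config E G e') = mark C G h (local_config E G e) \<and>
                      lt (local_config E G e') (local_config E G e))"

definition complete_prefix ::
  "'a set \<Rightarrow> 'a set \<Rightarrow> ('a \<times> 'a) set \<Rightarrow> ('a \<Rightarrow> nat) \<Rightarrow>
   'n set \<Rightarrow> 'n set \<Rightarrow> ('n \<times> 'n) set \<Rightarrow> ('n \<Rightarrow> 'a) \<Rightarrow> bool" where
  "complete_prefix P T F M0 C E G h \<longleftrightarrow>
     (\<exists>CU EU GU lt. is_unfolding P T F M0 CU EU GU h \<and> adequate_order CU EU GU h lt \<and>
        E = {e \<in> EU. \<not> (\<exists>e'. cutoff CU EU GU h lt e' \<and> (e', e) \<in> GU\<^sup>+)} \<and>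
        C = {c \<in> CU. \<forall>e. (e, c) \<in> GU \<longrightarrow> e \<in> E} \<and>
        G = GU \<inter> ((C \<union> E) \<times> (C \<union> E)))"

definition B_prec :: "('a \<times> 'a) set \<Rightarrow> 'n set \<Rightarrow> ('n \<times> 'n) set \<Rightarrow> ('n \<Rightarrow> 'a) \<Rightarrow> 'n \<Rightarrow> 'a \<Rightarrow> 'n set" where
  "B_prec F C G h e1 t2 = postset G e1 \<union> {c\<in>C. co C G c e1 \<and> h c \<in> preset F t2}"

definition cuts_of :: "'n set \<Rightarrow> ('n \<times> 'n) set \<Rightarrow> 'n set \<Rightarrow> 'n set set" where
  "cuts_of C G B = {X. X \<subseteq> B \<and> coset C G X \<and> (\<forall>Y. X \<subset> Y \<and> Y \<subseteq> B \<longrightarrow> \<not> coset C G Y)}"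

definition check_by_cuts ::
  "('a \<times> 'a) set \<Rightarrow> 'n set \<Rightarrow> 'n set \<Rightarrow> ('n \<times> 'n) set \<Rightarrow> ('n \<Rightarrow> 'a) \<Rightarrow> 'a \<Rightarrow> 'a \<Rightarrow> bool" where
  "check_by_cuts F C E G h t1 t2 \<longleftrightarrow>
     (\<exists>e1\<in>E. h e1 = t1 \<and>
        (\<exists>X'\<in>cuts_of C G (B_prec F C G h e1 t2). preset F t2 \<subseteq> h ` X'))"

end

theory Submission
  imports Defs
begin

text \<open>If the procedure succeeds with an event e1 and a cut X' of B_prec, pick one condition of X'
  for each input place of t2. These conditions are outputs of e1 or concurrent to it, so the
  events below them and e1 form a finite configuration with e1 maximal; removing e1 gives a
  reachable marking that enables t1, and firing t1 yields the marking of the whole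
  configuration, which enables t2.

  Conversely, every reachable marking is the marking of a configuration without cut-off events:
  in a configuration that is minimal for the adequate order among those with the given marking,
  a cut-off event e with witness e' would allow the part beyond the local configuration of e to
  be transported, along an isomorphism of futures, to the future of the local configuration of
  e', giving a smaller configuration with the same marking. An event e1 enabled there stays in
  the prefix, and the conditions of the new cut labelled by input places of t2 lie in B_prec and
  form a co-set, which extends to a maximal one.\<close>

section \<open>Occurrence nets\<close>

lemma conflict_sym: "conflict C G x y \<Longrightarrow> conflict C G y x"
  unfolding conflict_def by (metis (full_types))

lemma conflict_rtrancl_right: "conflict C G x y \<Longrightarrow> (y, z) \<in> G\<^sup>* \<Longrightarrow> conflict C G x z"
  unfolding conflict_def by (meson rtrancl_trans)

lemma conflict_rtrancl_left: "conflict C G x y \<Longrightarrow> (x, z) \<in> G\<^sup>* \<Longrightarrow> conflict C G z y"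
  unfolding conflict_def by (meson rtrancl_trans)

lemma coset_subset: "coset C G X \<Longrightarrow> Y \<subseteq> X \<Longrightarrow> coset C G Y"
  unfolding coset_def by blast

lemma coset_extends_to_cut:
  assumes "D \<subseteq> B" and "coset C G D"
  obtains X where "X \<in> cuts_of C G B" and "D \<subseteq> X"
proof -
  define \<A> where "\<A> = {Y. D \<subseteq> Y \<and> Y \<subseteq> B \<and> coset C G Y}"
  have chain_Union: "\<Union>\<C> \<in> \<A>" if ne: "\<C> \<noteq> {}" and ch: "subset.chain \<A> \<C>" for \<C>
  proof -
    have sub: "\<C> \<subseteq> \<A>" and lin: "\<forall>X\<in>\<C>. \<forall>Y\<in>\<C>. X \<subseteq> Y \<or> Y \<subseteq> X"
      using ch unfolding subset_chain_def by auto
    obtain X0 where "X0 \<in> \<C>" using ne by blast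
    then have "D \<subseteq> \<Union>\<C>" using sub unfolding \<A>_def by blast
    moreover have "\<Union>\<C> \<subseteq> B" using sub unfolding \<A>_def by blast
    moreover have "coset C G (\<Union>\<C>)"
      unfolding coset_def
    proof (intro ballI impI)
      fix a b assume a: "a \<in> \<Union>\<C>" and b: "b \<in> \<Union>\<C>" and "a \<noteq> b"
      obtain Xa Xb where "Xa \<in> \<C>" "a \<in> Xa" "Xb \<in> \<C>" "b \<in> Xb" using a b by blast
      then obtain Z where Z: "Z \<in> \<C>" "a \<in> Z" "b \<in> Z" using lin by blast
      then have "coset C G Z" using sub unfolding \<A>_def by blast
      then show "co C G a b" using Z \<open>a \<noteq> b\<close> unfolding coset_def by blast
    qed
    ultimately show ?thesis unfolding \<A>_def by blast
  qed
  have "D \<in> \<A>" using assms unfolding \<A>_def by blast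
  then obtain X where X: "X \<in> \<A>" "\<forall>Y\<in>\<A>. X \<subseteq> Y \<longrightarrow> Y = X"
    using subset_Zorn_nonempty[of \<A>] chain_Union by blast
  have "X \<in> cuts_of C G B"
    unfolding cuts_of_def
  proof (intro CollectI conjI allI impI notI)
    show "X \<subseteq> B" "coset C G X" using X(1) unfolding \<A>_def by auto
    fix Y assume Y: "X \<subset> Y \<and> Y \<subseteq> B" "coset C G Y"
    then have "Y \<in> \<A>" using X(1) unfolding \<A>_def by blast
    then show False using X(2) Y(1) by blast
  qed
  then show thesis using that X(1) unfolding \<A>_def by blast
qed

lemma card_fiber_bij_betw:
  "bij_betw h A B \<Longrightarrow> card {c\<in>A. h c = p} = (if p \<in> B then 1 else 0)"
proof (cases "p \<in> B")
  case True
  assume b: "bij_betw h A B"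
  then obtain c where "c \<in> A" "h c = p" using True by (metis bij_betw_def imageE)
  then have "{c\<in>A. h c = p} = {c}" using b unfolding bij_betw_def inj_on_def by blast
  then show ?thesis using True by simp
next
  case False
  assume "bij_betw h A B"
  then have "{c\<in>A. h c = p} = {}" using False unfolding bij_betw_def by blast
  then show ?thesis using False by (metis card.empty)
qed

locale occ_net =
  fixes C E :: "'n set" and G :: "('n \<times> 'n) set"
  assumes occurrence_net: "occurrence_net C E G"
begin

abbreviation pre :: "'n \<Rightarrow> 'n set" where "pre x \<equiv> preset G x"
abbreviation post :: "'n \<Rightarrow> 'n set" where "post x \<equiv> postset G x"
abbreviation fin_config :: "'n set \<Rightarrow> bool" where
  "fin_config X \<equiv> configuration C E G X \<and> finite X"

lemma conds_events_disjoint: "C \<inter> E = {}"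
  and arcs_bipartite: "G \<subseteq> (C \<times> E) \<union> (E \<times> C)"
  and unique_producer: "c \<in> C \<Longrightarrow> (e1, c) \<in> G \<Longrightarrow> (e2, c) \<in> G \<Longrightarrow> e1 = e2"
  and acyclic: "(x, x) \<notin> G\<^sup>+"
  and finite_past: "x \<in> C \<union> E \<Longrightarrow> finite {y. (y, x) \<in> G\<^sup>+}"
  and no_self_conflict: "x \<in> C \<union> E \<Longrightarrow> \<not> conflict C G x x"
  using occurrence_net unfolding occurrence_net_def by blast+

lemma arc_cases: "(x, y) \<in> G \<Longrightarrow> (x \<in> C \<and> y \<in> E) \<or> (x \<in> E \<and> y \<in> C)"
  using arcs_bipartite by blast

lemma arc_from_cond: "(x, y) \<in> G \<Longrightarrow> x \<in> C \<Longrightarrow> y \<in> E"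
  and arc_from_event: "(x, y) \<in> G \<Longrightarrow> x \<in> E \<Longrightarrow> y \<in> C"
  and arc_to_cond: "(x, y) \<in> G \<Longrightarrow> y \<in> C \<Longrightarrow> x \<in> E"
  and arc_to_event: "(x, y) \<in> G \<Longrightarrow> y \<in> E \<Longrightarrow> x \<in> C"
  using arcs_bipartite conds_events_disjoint by blast+

lemma post_subset_conds: "e \<in> E \<Longrightarrow> post e \<subseteq> C"
  using arc_from_event unfolding postset_def by blast

lemma pre_subset_conds: "e \<in> E \<Longrightarrow> pre e \<subseteq> C"
  using arc_to_event unfolding preset_def by blast

lemma rtrancl_event_to_cond:
  assumes "(u, b) \<in> G\<^sup>*" "u \<in> E" "b \<in> C"
  obtains w where "(w, b) \<in> G" "(u, w) \<in> G\<^sup>*"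
proof -
  have "u \<noteq> b" using assms conds_events_disjoint by blast
  then have "(u, b) \<in> G\<^sup>+" using assms(1) rtrancl_eq_or_trancl by metis
  then show thesis using that by (meson tranclD2 trancl_into_rtrancl)
qed

lemma conflict_producer:
  assumes "conflict C G b y" "b \<in> C" "(w, b) \<in> G"
  shows "conflict C G w y"
proof -
  obtain s u1 u2 where s: "s \<in> C" "u1 \<noteq> u2" "(s, u1) \<in> G" "(s, u2) \<in> G"
    "(u1, b) \<in> G\<^sup>*" "(u2, y) \<in> G\<^sup>*"
    using assms(1) unfolding conflict_def by blast
  have "u1 \<in> E" using arc_from_cond s by blast
  then obtain w' where "(w', b) \<in> G" "(u1, w') \<in> G\<^sup>*"
    using rtrancl_event_to_cond s assms(2) by blast
  moreover have "w' = w" using unique_producer assms calculation(1) by blast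
  ultimately show ?thesis unfolding conflict_def using s by blast
qed

lemma conflict_event_cases:
  assumes "conflict C G x y" "x \<in> E"
  shows "(\<exists>b\<in>pre x. conflict C G b y) \<or> (\<exists>b\<in>pre x. \<exists>u. u \<noteq> x \<and> (b, u) \<in> G \<and> (u, y) \<in> G\<^sup>*)"
proof -
  obtain s u1 u2 where s: "s \<in> C" "u1 \<noteq> u2" "(s, u1) \<in> G" "(s, u2) \<in> G"
    "(u1, x) \<in> G\<^sup>*" "(u2, y) \<in> G\<^sup>*"
    using assms unfolding conflict_def by blast
  show ?thesis
  proof (cases "u1 = x")
    case True
    then have "s \<in> pre x" "u2 \<noteq> x" using s unfolding preset_def by auto
    then show ?thesis using s by blast
  next
    case False
    then have "(u1, x) \<in> G\<^sup>+" using s rtrancl_eq_or_trancl by metis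
    then obtain b where "(u1, b) \<in> G\<^sup>*" "(b, x) \<in> G" by (meson tranclD2)
    then show ?thesis using s unfolding conflict_def preset_def by blast
  qed
qed

lemma config_closed:
  assumes "configuration C E G X" "e \<in> X" "(u, e) \<in> G\<^sup>*" "u \<in> E"
  shows "u \<in> X"
  using assms unfolding configuration_def by (metis rtrancl_eq_or_trancl)

lemma config_conflict_free: "configuration C E G X \<Longrightarrow> e \<in> X \<Longrightarrow> e' \<in> X \<Longrightarrow> \<not> conflict C G e e'"
  unfolding configuration_def by blast

lemma config_no_branching:
  assumes "configuration C E G X" "u1 \<in> X" "u2 \<in> X" "s \<in> C" "(s, u1) \<in> G" "(s, u2) \<in> G"
  shows "u1 = u2"
  using assms config_conflict_free unfolding conflict_def by blast

lemma cut_iff: "b \<in> cut C G X \<longleftrightarrow> (b \<in> min_conds C G \<or> (\<exists>e\<in>X. (e, b) \<in> G)) \<and> (\<forall>e\<in>X. (b, e) \<notin> G)"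
  unfolding cut_def preset_def postset_def by blast

lemma min_conds_iff: "b \<in> min_conds C G \<longleftrightarrow> b \<in> C \<and> (\<forall>w. (w, b) \<notin> G)"
  unfolding min_conds_def preset_def by blast

lemma cut_subset_conds: "X \<subseteq> E \<Longrightarrow> cut C G X \<subseteq> C"
  using arc_from_event unfolding cut_def min_conds_def postset_def by blast

lemma cut_cond: "configuration C E G X \<Longrightarrow> b \<in> cut C G X \<Longrightarrow> b \<in> C"
  using cut_subset_conds unfolding configuration_def by blast

lemma cut_producer: "configuration C E G X \<Longrightarrow> b \<in> cut C G X \<Longrightarrow> (w, b) \<in> G \<Longrightarrow> w \<in> X"
  using unique_producer cut_cond unfolding cut_iff min_conds_iff by blast

lemma cut_past_in_config:
  assumes "configuration C E G X" "b \<in> cut C G X" "(u, b) \<in> G\<^sup>*" "u \<in> E"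
  shows "u \<in> X"
proof -
  obtain w where "(w, b) \<in> G" "(u, w) \<in> G\<^sup>*"
    using rtrancl_event_to_cond assms cut_cond by blast
  then show ?thesis using cut_producer config_closed assms by blast
qed

lemma cut_not_before:
  assumes "configuration C E G X" "b \<in> cut C G X" "y \<in> X \<union> cut C G X"
  shows "(b, y) \<notin> G\<^sup>+"
proof
  assume "(b, y) \<in> G\<^sup>+"
  then obtain u where u: "(b, u) \<in> G" "(u, y) \<in> G\<^sup>*" by (meson tranclD)
  then have "u \<in> X" using assms arc_from_cond cut_cond config_closed cut_past_in_config by blast
  then show False using assms(2) u(1) unfolding cut_iff by blast
qed

lemma cut_no_conflict:
  assumes "configuration C E G X" "b \<in> cut C G X" "y \<in> X \<union> cut C G X"
  shows "\<not> conflict C G b y"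
proof
  assume "conflict C G b y"
  then obtain s u1 u2 where s: "s \<in> C" "u1 \<noteq> u2" "(s, u1) \<in> G" "(s, u2) \<in> G"
    "(u1, b) \<in> G\<^sup>*" "(u2, y) \<in> G\<^sup>*"
    unfolding conflict_def by blast
  have "u1 \<in> E" "u2 \<in> E" using arc_from_cond s by auto
  then have "u1 \<in> X" "u2 \<in> X" using cut_past_in_config config_closed assms s by blast+
  then show False using config_no_branching assms(1) s by blast
qed

lemma cut_coset: "configuration C E G X \<Longrightarrow> coset C G (cut C G X)"
  unfolding coset_def co_def using cut_not_before cut_no_conflict by blast

lemma exists_maximal:
  assumes "finite W" "W \<noteq> {}" "W \<subseteq> C \<union> E"
  obtains e where "e \<in> W" "\<forall>e'\<in>W. (e, e') \<notin> G\<^sup>+"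
proof -
  define depth where "depth x = card {y. (y, x) \<in> G\<^sup>+}" for x
  have "Max (depth ` W) \<in> depth ` W" using assms by (intro Max_in) auto
  then obtain e where e: "e \<in> W" "depth e = Max (depth ` W)" by (metis imageE)
  have "(e, e') \<notin> G\<^sup>+" if "e' \<in> W" for e'
  proof
    assume ee: "(e, e') \<in> G\<^sup>+"
    then have "{y. (y, e) \<in> G\<^sup>+} \<subset> {y. (y, e') \<in> G\<^sup>+}" using acyclic by auto
    then have "depth e < depth e'"
      unfolding depth_def using finite_past that assms by (simp add: psubset_card_mono subset_iff)
    moreover have "depth e' \<le> Max (depth ` W)" using that assms by simp
    ultimately show False using e by simp
  qed
  then show thesis using that e by blast
qed

lemma remove_maximal:
  assumes W: "fin_config W" and e: "e \<in> W" and max: "\<forall>e'\<in>W. (e, e') \<notin> G\<^sup>+"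
  shows "fin_config (W - {e})" "pre e \<subseteq> cut C G (W - {e})"
proof -
  have Wc: "configuration C E G W" using W by simp
  show "fin_config (W - {e})"
    unfolding configuration_def
  proof (intro conjI ballI impI)
    show "W - {e} \<subseteq> E" "finite (W - {e})" using W unfolding configuration_def by auto
    fix x e' assume "x \<in> W - {e}" "e' \<in> E" "(e', x) \<in> G\<^sup>+"
    then show "e' \<in> W - {e}" using Wc max unfolding configuration_def by blast
  next
    fix x y assume "x \<in> W - {e}" "y \<in> W - {e}"
    then show "\<not> conflict C G x y" using config_conflict_free Wc by blast
  qed
  show "pre e \<subseteq> cut C G (W - {e})"
  proof
    fix b assume b: "b \<in> pre e"
    have bC: "b \<in> C" using Wc e b arc_to_event unfolding configuration_def preset_def by blast
    have "(w, e) \<in> G\<^sup>+" if "(w, b) \<in> G" for w using that b unfolding preset_def by auto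
    then have "b \<in> min_conds C G \<or> (\<exists>w\<in>W - {e}. (w, b) \<in> G)"
      using bC arc_to_cond Wc e acyclic unfolding min_conds_iff configuration_def by blast
    moreover have "\<forall>u\<in>W - {e}. (b, u) \<notin> G"
      using config_no_branching[OF Wc _ e bC] b unfolding preset_def by blast
    ultimately show "b \<in> cut C G (W - {e})" unfolding cut_iff by blast
  qed
qed

definition events_below :: "'n set \<Rightarrow> 'n set" where
  "events_below Y = {u\<in>E. \<exists>y\<in>Y. (u, y) \<in> G\<^sup>*}"

lemma local_config_eq: "local_config E G e = events_below {e}"
  unfolding local_config_def events_below_def by blast

lemma events_below_config:
  assumes "finite Y" "Y \<subseteq> C \<union> E" "\<forall>x\<in>Y. \<forall>y\<in>Y. \<not> conflict C G x y"
  shows "fin_config (events_below Y)"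
proof
  have "events_below Y \<subseteq> (\<Union>y\<in>Y. insert y {z. (z, y) \<in> G\<^sup>+})"
    unfolding events_below_def by (auto simp: rtrancl_eq_or_trancl)
  moreover have "finite (\<Union>y\<in>Y. insert y {z. (z, y) \<in> G\<^sup>+})"
    using assms(1,2) finite_past by blast
  ultimately show "finite (events_below Y)" by (rule finite_subset)
  show "configuration C E G (events_below Y)"
    unfolding configuration_def
  proof (intro conjI ballI impI)
    show "events_below Y \<subseteq> E" unfolding events_below_def by blast
    fix x e' assume x: "x \<in> events_below Y" and e': "e' \<in> E" "(e', x) \<in> G\<^sup>+"
    then obtain y where y: "y \<in> Y" "(x, y) \<in> G\<^sup>*" unfolding events_below_def by blast
    have "(e', y) \<in> G\<^sup>*" using e'(2) y(2) by (meson trancl_into_rtrancl rtrancl_trans)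
    then show "e' \<in> events_below Y" using e'(1) y(1) unfolding events_below_def by blast
  next
    fix u v assume "u \<in> events_below Y" "v \<in> events_below Y"
    then obtain y y' where "y \<in> Y" "(u, y) \<in> G\<^sup>*" "y' \<in> Y" "(v, y') \<in> G\<^sup>*"
      unfolding events_below_def by blast
    then show "\<not> conflict C G u v"
      using assms(3) conflict_rtrancl_left[of C G u v y] conflict_rtrancl_right[of C G y v y'] by blast
  qed
qed

lemma conds_in_cut_events_below:
  assumes "D \<subseteq> C" "D \<subseteq> Y" "\<forall>c\<in>D. \<forall>y\<in>Y. (c, y) \<notin> G\<^sup>+"
  shows "D \<subseteq> cut C G (events_below Y)"
proof
  fix c assume c: "c \<in> D"
  have "w \<in> events_below Y" if "(w, c) \<in> G" for w
    using that c assms(1,2) arc_to_cond unfolding events_below_def by blast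
  then have "c \<in> min_conds C G \<or> (\<exists>w\<in>events_below Y. (w, c) \<in> G)"
    using c assms(1) unfolding min_conds_iff by blast
  moreover have "(c, u) \<notin> G" if u: "u \<in> events_below Y" for u
  proof
    assume cu: "(c, u) \<in> G"
    obtain y where "y \<in> Y" "(u, y) \<in> G\<^sup>*" using u unfolding events_below_def by blast
    then show False using cu c assms(3) by (meson rtrancl_into_trancl2)
  qed
  ultimately show "c \<in> cut C G (events_below Y)" unfolding cut_iff by blast
qed

lemma future_iff:
  "x \<in> future C E G X \<longleftrightarrow> x \<in> C \<union> E \<and> x \<notin> X \<and> (\<forall>e\<in>X. (x, e) \<notin> G) \<and> (\<forall>e\<in>X. \<not> conflict C G x e)"
  unfolding future_def preset_def by auto

lemma event_in_future:
  "configuration C E G X \<Longrightarrow> x \<in> E \<Longrightarrow> x \<notin> X \<Longrightarrow> \<forall>e\<in>X. \<not> conflict C G x e \<Longrightarrow> x \<in> future C E G X"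
  unfolding future_iff configuration_def using arc_to_event conds_events_disjoint by blast

lemma cut_subset_future: "configuration C E G X \<Longrightarrow> cut C G X \<subseteq> future C E G X"
proof
  fix b assume X: "configuration C E G X" and b: "b \<in> cut C G X"
  then have "b \<in> C" "b \<notin> X" using cut_cond conds_events_disjoint unfolding configuration_def by blast+
  then show "b \<in> future C E G X" using X b cut_no_conflict unfolding future_iff cut_iff by blast
qed

lemma post_in_future:
  assumes X: "configuration C E G X" and e: "e \<in> future C E G X" "e \<in> E" and b: "b \<in> post e"
  shows "b \<in> future C E G X"
proof -
  have eb: "(e, b) \<in> G" and bC: "b \<in> C" using b post_subset_conds e unfolding postset_def by auto
  have "(b, u) \<notin> G" if u: "u \<in> X" for u
  proof
    assume "(b, u) \<in> G"
    then have "(e, u) \<in> G\<^sup>+" using eb by auto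
    then have "e \<in> X" using X u e(2) unfolding configuration_def by blast
    then show False using e(1) unfolding future_iff by blast
  qed
  moreover have "\<not> conflict C G b x" if "x \<in> X" for x
    using conflict_producer bC eb e that unfolding future_iff by blast
  moreover have "b \<notin> X" using bC X conds_events_disjoint unfolding configuration_def by blast
  ultimately show ?thesis using bC unfolding future_iff by blast
qed

lemma producer_in_future:
  assumes X: "configuration C E G X" and b: "b \<in> future C E G X" "b \<in> C"
    and w: "(w, b) \<in> G" "w \<notin> X"
  shows "w \<in> future C E G X"
proof -
  have "\<not> conflict C G w e" if "e \<in> X" for e
    using conflict_rtrancl_left[of C G w e b] w b that unfolding future_iff by blast
  then show ?thesis using event_in_future X w arc_to_cond b by blast
qed

lemma future_cond_in_cut:
  "b \<in> future C E G X \<Longrightarrow> b \<in> C \<Longrightarrow> \<forall>w. (w, b) \<in> G \<longrightarrow> w \<in> X \<Longrightarrow> b \<in> cut C G X"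
  unfolding cut_iff future_iff min_conds_iff by blast

lemma cut_producer_not_future:
  "configuration C E G X \<Longrightarrow> b \<in> cut C G X \<Longrightarrow> (w, b) \<in> G \<Longrightarrow> w \<notin> future C E G X"
  using cut_producer future_iff by blast

definition trunc_events :: "'n set \<Rightarrow> 'n set" where
  "trunc_events K = {e \<in> E. \<not> (\<exists>e'\<in>K. (e', e) \<in> G\<^sup>+)}"

definition trunc_conds :: "'n set \<Rightarrow> 'n set" where
  "trunc_conds K = {c \<in> C. \<forall>e. (e, c) \<in> G \<longrightarrow> e \<in> trunc_events K}"

definition trunc_arcs :: "'n set \<Rightarrow> ('n \<times> 'n) set" where
  "trunc_arcs K = G \<inter> ((trunc_conds K \<union> trunc_events K) \<times> (trunc_conds K \<union> trunc_events K))"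

lemma trunc_pred_closed:
  assumes "(x, y) \<in> G" "y \<in> trunc_conds K \<union> trunc_events K"
  shows "x \<in> trunc_conds K \<union> trunc_events K"
proof (cases "y \<in> trunc_events K")
  case True
  then have "x \<in> C" using assms arc_to_event unfolding trunc_events_def by blast
  moreover have "e \<in> trunc_events K" if ex: "(e, x) \<in> G" for e
  proof -
    have ey: "(e, y) \<in> G\<^sup>+" using ex assms(1) by auto
    have "(e', e) \<notin> G\<^sup>+" if "e' \<in> K" for e'
      using True that trancl_trans[OF _ ey] unfolding trunc_events_def by blast
    then have "\<not> (\<exists>e'\<in>K. (e', e) \<in> G\<^sup>+)" by blast
    moreover have "e \<in> E" using arc_to_cond ex \<open>x \<in> C\<close> by blast
    ultimately show ?thesis unfolding trunc_events_def by blast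
  qed
  ultimately show ?thesis unfolding trunc_conds_def by blast
next
  case False
  then show ?thesis using assms unfolding trunc_conds_def by blast
qed

lemma trunc_rtrancl:
  "(x, y) \<in> G\<^sup>* \<Longrightarrow> y \<in> trunc_conds K \<union> trunc_events K \<Longrightarrow>
     x \<in> trunc_conds K \<union> trunc_events K \<and> (x, y) \<in> (trunc_arcs K)\<^sup>*"
proof (induction rule: converse_rtrancl_induct)
  case (step x z)
  then show ?case using trunc_pred_closed unfolding trunc_arcs_def
    by (blast intro: converse_rtrancl_into_rtrancl)
qed simp

lemma trunc_arcs_subset: "trunc_arcs K \<subseteq> G"
  unfolding trunc_arcs_def by blast

lemma trunc_trancl_iff:
  assumes "x \<in> trunc_conds K \<union> trunc_events K" "y \<in> trunc_conds K \<union> trunc_events K"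
  shows "(x, y) \<in> (trunc_arcs K)\<^sup>+ \<longleftrightarrow> (x, y) \<in> G\<^sup>+"
proof
  assume "(x, y) \<in> G\<^sup>+"
  then obtain z where z: "(x, z) \<in> G" "(z, y) \<in> G\<^sup>*" by (meson tranclD)
  then have "z \<in> trunc_conds K \<union> trunc_events K" "(z, y) \<in> (trunc_arcs K)\<^sup>*"
    using trunc_rtrancl assms(2) by blast+
  moreover have "(x, z) \<in> trunc_arcs K" using z assms calculation unfolding trunc_arcs_def by blast
  ultimately show "(x, y) \<in> (trunc_arcs K)\<^sup>+" by (meson rtrancl_into_trancl2)
qed (use trancl_mono trunc_arcs_subset in blast)

lemma trunc_conflict_iff:
  assumes "x \<in> trunc_conds K \<union> trunc_events K" "y \<in> trunc_conds K \<union> trunc_events K"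
  shows "conflict (trunc_conds K) (trunc_arcs K) x y \<longleftrightarrow> conflict C G x y"
proof
  assume "conflict (trunc_conds K) (trunc_arcs K) x y"
  then obtain s u1 u2 where s: "s \<in> trunc_conds K" "u1 \<noteq> u2" "(s, u1) \<in> trunc_arcs K"
    "(s, u2) \<in> trunc_arcs K" "(u1, x) \<in> (trunc_arcs K)\<^sup>*" "(u2, y) \<in> (trunc_arcs K)\<^sup>*"
    unfolding conflict_def by blast
  have "(u1, x) \<in> G\<^sup>*" "(u2, y) \<in> G\<^sup>*" using s rtrancl_mono[OF trunc_arcs_subset] by blast+
  moreover have "s \<in> C" "(s, u1) \<in> G" "(s, u2) \<in> G"
    using s trunc_arcs_subset unfolding trunc_conds_def by blast+
  ultimately show "conflict C G x y" unfolding conflict_def using s(2) by blast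
next
  assume "conflict C G x y"
  then obtain s u1 u2 where s: "s \<in> C" "u1 \<noteq> u2" "(s, u1) \<in> G" "(s, u2) \<in> G"
    "(u1, x) \<in> G\<^sup>*" "(u2, y) \<in> G\<^sup>*"
    unfolding conflict_def by blast
  have u: "u1 \<in> trunc_conds K \<union> trunc_events K" "(u1, x) \<in> (trunc_arcs K)\<^sup>*"
    "u2 \<in> trunc_conds K \<union> trunc_events K" "(u2, y) \<in> (trunc_arcs K)\<^sup>*"
    using trunc_rtrancl s assms by blast+
  have "s \<in> trunc_conds K \<union> trunc_events K" using trunc_pred_closed s(3) u(1) by blast
  then have "s \<in> trunc_conds K" "(s, u1) \<in> trunc_arcs K" "(s, u2) \<in> trunc_arcs K"
    using s u conds_events_disjoint unfolding trunc_arcs_def trunc_events_def by blast+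
  then show "conflict (trunc_conds K) (trunc_arcs K) x y"
    unfolding conflict_def using s u by blast
qed

lemma trunc_co_iff:
  "x \<in> trunc_conds K \<union> trunc_events K \<Longrightarrow> y \<in> trunc_conds K \<union> trunc_events K \<Longrightarrow>
     co (trunc_conds K) (trunc_arcs K) x y \<longleftrightarrow> co C G x y"
  unfolding co_def using trunc_trancl_iff trunc_conflict_iff by metis

lemma trunc_coset_iff:
  "X \<subseteq> trunc_conds K \<union> trunc_events K \<Longrightarrow> coset (trunc_conds K) (trunc_arcs K) X \<longleftrightarrow> coset C G X"
  unfolding coset_def using trunc_co_iff by (metis subsetD)

lemma trunc_postset: "e \<in> trunc_events K \<Longrightarrow> postset (trunc_arcs K) e = post e"
  using post_subset_conds unique_producer
  unfolding trunc_arcs_def trunc_conds_def trunc_events_def postset_def by blast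

lemma config_subset_trunc_events:
  assumes W: "configuration C E G W" and "K \<subseteq> E" and "\<forall>e\<in>W \<inter> K. \<forall>x\<in>W. (e, x) \<notin> G\<^sup>+"
  shows "W \<subseteq> trunc_events K"
proof
  fix x assume x: "x \<in> W"
  have "e' \<notin> K" if "(e', x) \<in> G\<^sup>+" for e'
    using that assms x unfolding configuration_def by blast
  then show "x \<in> trunc_events K" using x W unfolding configuration_def trunc_events_def by blast
qed

lemma cut_subset_trunc_conds:
  "configuration C E G W \<Longrightarrow> W \<subseteq> trunc_events K \<Longrightarrow> cut C G W \<subseteq> trunc_conds K"
  using cut_cond cut_producer unfolding trunc_conds_def by blast

lemma cut_co_maximal_event:
  assumes W: "configuration C E G W" and e: "e \<in> W" "\<forall>x\<in>W. (e, x) \<notin> G\<^sup>+"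
    and c: "c \<in> cut C G W" "c \<notin> post e"
  shows "co C G c e"
proof -
  have "(e, c) \<notin> G\<^sup>+"
  proof
    assume "(e, c) \<in> G\<^sup>+"
    then obtain w where w: "(e, w) \<in> G\<^sup>*" "(w, c) \<in> G" by (meson tranclD2)
    then have "w \<in> W" "w \<noteq> e" using cut_producer W c unfolding postset_def by auto
    then show False using e w by (metis rtrancl_eq_or_trancl)
  qed
  then show ?thesis
    using cut_not_before cut_no_conflict W e c conflict_sym unfolding co_def by blast
qed

end

section \<open>Branching processes and markings\<close>

locale branching_proc =
  fixes P T :: "'a set" and F :: "('a \<times> 'a) set" and M0 :: "'a \<Rightarrow> nat"
    and C E :: "'n set" and G :: "('n \<times> 'n) set" and h :: "'n \<Rightarrow> 'a"
  assumes net_system: "net_system P T F M0"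
    and branching_process: "branching_process P T F M0 C E G h"

sublocale branching_proc \<subseteq> occ_net C E G
  using branching_process by unfold_locales (simp add: branching_process_def)

context branching_proc
begin

lemma label_events: "e \<in> E \<Longrightarrow> h e \<in> T"
  using branching_process by (auto simp: branching_process_def)

lemma pre_bij: "e \<in> E \<Longrightarrow> bij_betw h (pre e) (preset F (h e))"
  using branching_process by (simp add: branching_process_def)

lemma post_bij: "e \<in> E \<Longrightarrow> bij_betw h (post e) (postset F (h e))"
  using branching_process by (simp add: branching_process_def)

lemma finite_min_conds: "finite (min_conds C G)"
  using branching_process by (simp add: branching_process_def)

lemma card_min_conds: "card {c \<in> min_conds C G. h c = p} = M0 p"
  using branching_process by (simp add: branching_process_def)

lemma events_unique: "e1 \<in> E \<Longrightarrow> e2 \<in> E \<Longrightarrow> pre e1 = pre e2 \<Longrightarrow> h e1 = h e2 \<Longrightarrow> e1 = e2"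
  using branching_process by (simp add: branching_process_def)

lemma finite_net_preset: "t \<in> T \<Longrightarrow> finite (preset F t)"
  and finite_net_postset: "t \<in> T \<Longrightarrow> finite (postset F t)"
  and net_preset_nonempty: "t \<in> T \<Longrightarrow> preset F t \<noteq> {}"
proof -
  assume t: "t \<in> T"
  have F: "F \<subseteq> (P \<times> T) \<union> (T \<times> P)" "P \<inter> T = {}" "finite P"
    using net_system by (simp_all add: net_system_def)
  have "preset F t \<subseteq> P" "postset F t \<subseteq> P"
    using F(1,2) t unfolding preset_def postset_def by auto
  then show "finite (preset F t)" "finite (postset F t)" using F(3) finite_subset by blast+
  show "preset F t \<noteq> {}" using net_system t by (simp add: net_system_def)
qed

lemma finite_pre: "e \<in> E \<Longrightarrow> finite (pre e)"
  using bij_betw_finite pre_bij finite_net_preset label_events by blast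

lemma finite_post: "e \<in> E \<Longrightarrow> finite (post e)"
  using bij_betw_finite post_bij finite_net_postset label_events by blast

lemma pre_nonempty: "e \<in> E \<Longrightarrow> pre e \<noteq> {}"
  using pre_bij net_preset_nonempty label_events unfolding bij_betw_def by (metis image_empty)

lemma label_post:
  assumes "e \<in> E" "b \<in> post e" "e' \<in> E" "h e' = h e"
  shows "\<exists>b'\<in>post e'. h b' = h b"
proof -
  have "h b \<in> postset F (h e')" using post_bij[OF assms(1)] assms bij_betwE by metis
  then show ?thesis using post_bij[OF assms(3)] unfolding bij_betw_def by (metis imageE)
qed

lemma finite_cut: "fin_config X \<Longrightarrow> finite (cut C G X)"
proof -
  assume X: "fin_config X"
  have "cut C G X \<subseteq> min_conds C G \<union> (\<Union>e\<in>X. post e)" unfolding cut_def by blast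
  moreover have "finite (\<Union>e\<in>X. post e)" using X finite_post unfolding configuration_def by blast
  ultimately show ?thesis using finite_min_conds finite_subset by blast
qed

lemma mark_empty: "mark C G h {} = M0"
proof
  fix p
  have "cut C G {} = min_conds C G" unfolding cut_def by simp
  then show "mark C G h {} p = M0 p" unfolding mark_def using card_min_conds by simp
qed

lemma mark_pos:
  assumes "fin_config W" "c \<in> cut C G W"
  shows "0 < mark C G h W (h c)"
proof -
  have "finite {c' \<in> cut C G W. h c' = h c}" using finite_cut assms(1) by simp
  then show ?thesis unfolding mark_def using assms(2) card_gt_0_iff by blast
qed

lemma enabled_cut_cover:
  assumes "enabled F (mark C G h W) t" "p \<in> preset F t"
  shows "\<exists>c\<in>cut C G W. h c = p"
proof -
  have "card {c \<in> cut C G W. h c = p} \<noteq> 0" using assms unfolding enabled_def mark_def by auto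
  then have "{c \<in> cut C G W. h c = p} \<noteq> {}" by (metis card.empty)
  then show ?thesis by blast
qed

lemma enabled_if_pre_in_cut:
  assumes "fin_config Y" "e \<in> E" "pre e \<subseteq> cut C G Y"
  shows "enabled F (mark C G h Y) (h e)"
  unfolding enabled_def
proof
  fix p assume "p \<in> preset F (h e)"
  then obtain c where "c \<in> pre e" "p = h c" using pre_bij[OF assms(2)] unfolding bij_betw_def by blast
  then show "0 < mark C G h Y p" using mark_pos assms by blast
qed

context
  fixes Y e
  assumes Y: "fin_config Y" and e: "e \<in> E" and pre_cut: "pre e \<subseteq> cut C G Y"
begin

lemma extension_not_in: "e \<notin> Y"
proof
  obtain b where b: "b \<in> pre e" using pre_nonempty[OF e] by blast
  then have "b \<in> cut C G Y" using pre_cut by blast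
  moreover assume "e \<in> Y"
  ultimately show False using b unfolding cut_iff preset_def by blast
qed

lemma extension_config: "fin_config (insert e Y)"
proof -
  have closed: "e' \<in> insert e Y" if x: "x \<in> insert e Y" and e': "e' \<in> E" "(e', x) \<in> G\<^sup>+" for x e'
  proof (cases "x = e")
    case True
    then obtain b where "(e', b) \<in> G\<^sup>*" "(b, e) \<in> G" using e'(2) by (blast dest: tranclD2)
    then have "e' \<in> Y" using cut_past_in_config[of Y b e'] Y pre_cut e'(1) unfolding preset_def by blast
    then show ?thesis by blast
  next
    case False
    then show ?thesis using Y x e' unfolding configuration_def by blast
  qed
  have no_conflict: "\<not> conflict C G e y" if "y \<in> Y" for y
  proof
    assume "conflict C G e y"
    from conflict_event_cases[OF this e] show False
    proof (elim disjE bexE exE conjE)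
      fix b assume "b \<in> pre e" "conflict C G b y"
      then show False using cut_no_conflict Y pre_cut that by blast
    next
      fix b u assume bu: "b \<in> pre e" "(b, u) \<in> G" "(u, y) \<in> G\<^sup>*"
      then have "u \<in> Y" using config_closed Y that arc_from_cond pre_subset_conds e by blast
      moreover have "b \<in> cut C G Y" using bu(1) pre_cut by blast
      ultimately show False using bu(2) unfolding cut_iff by blast
    qed
  qed
  have "\<not> conflict C G x y" if "x \<in> insert e Y" "y \<in> insert e Y" for x y
  proof (cases "x = e")
    case True
    then show ?thesis using that no_conflict no_self_conflict e by blast
  next
    case False
    then have "x \<in> Y" using that by blast
    then show ?thesis
      using that no_conflict[of x] conflict_sym[of C G x e] Y config_conflict_free by blast
  qed
  moreover have "insert e Y \<subseteq> E" using Y e unfolding configuration_def by blast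
  ultimately show ?thesis using closed Y unfolding configuration_def by blast
qed

lemma extension_cut: "cut C G (insert e Y) = (cut C G Y - pre e) \<union> post e"
proof -
  have "post e \<inter> pre y = {}" if "y \<in> insert e Y" for y
  proof (rule ccontr)
    assume "post e \<inter> pre y \<noteq> {}"
    then have ey: "(e, y) \<in> G\<^sup>+" unfolding preset_def postset_def
      by (blast intro: r_into_trancl trancl_into_trancl)
    then have "y \<noteq> e" using acyclic by blast
    then show False using ey that Y e extension_not_in unfolding configuration_def by blast
  qed
  then show ?thesis unfolding cut_def by blast
qed

lemma post_cut_disjoint: "post e \<inter> cut C G Y = {}"
  using cut_producer Y extension_not_in unfolding postset_def by blast

lemma extension_mark: "mark C G h (insert e Y) = fire F (mark C G h Y) (h e)"
proof
  fix p
  let ?fib = "\<lambda>A. {c \<in> A. h c = p}"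
  have fin: "finite (cut C G Y)" "finite (pre e)" "finite (post e)"
    using finite_cut Y finite_pre finite_post e by blast+
  have "card (?fib (cut C G (insert e Y))) = card (?fib (cut C G Y - pre e)) + card (?fib (post e))"
    unfolding extension_cut using post_cut_disjoint fin
    by (subst card_Un_disjoint[symmetric]) (auto intro: arg_cong[where f = card])
  moreover have "card (?fib (cut C G Y - pre e)) = card (?fib (cut C G Y)) - card (?fib (pre e))"
    using pre_cut fin by (subst card_Diff_subset[symmetric]) (auto intro: arg_cong[where f = card])
  ultimately show "mark C G h (insert e Y) p = fire F (mark C G h Y) (h e) p"
    unfolding mark_def fire_def
    using card_fiber_bij_betw[OF pre_bij[OF e]] card_fiber_bij_betw[OF post_bij[OF e]] by simp
qed

end

lemma mark_reachable: "fin_config W \<Longrightarrow> mark C G h W \<in> reach T F M0"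
proof (induction "card W" arbitrary: W)
  case 0
  then have "W = {}" by simp
  then show ?case using mark_empty reach.init by metis
next
  case (Suc n)
  then have "W \<noteq> {}" "W \<subseteq> C \<union> E" unfolding configuration_def by auto
  then obtain e where e: "e \<in> W" "\<forall>e'\<in>W. (e, e') \<notin> G\<^sup>+"
    using exists_maximal[of W] Suc.prems by blast
  then have W': "fin_config (W - {e})" and pre_cut: "pre e \<subseteq> cut C G (W - {e})"
    using remove_maximal Suc.prems by blast+
  have eE: "e \<in> E" using e Suc.prems unfolding configuration_def by blast
  have "mark C G h (W - {e}) \<in> reach T F M0" using Suc e W' by simp
  moreover have "mark C G h W = fire F (mark C G h (W - {e})) (h e)"
    using extension_mark[OF W' eE pre_cut] e by (simp add: insert_absorb)
  ultimately show ?case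
    using reach.step enabled_if_pre_in_cut[OF W' eE pre_cut] label_events[OF eE] by metis
qed

end

locale net_unfolding = branching_proc P T F M0 C E G h
  for P T :: "'a set" and F :: "('a \<times> 'a) set" and M0 :: "'a \<Rightarrow> nat"
    and C E :: "'n set" and G :: "('n \<times> 'n) set" and h :: "'n \<Rightarrow> 'a" +
  assumes extension: "B \<subseteq> C \<Longrightarrow> coset C G B \<Longrightarrow> t \<in> T \<Longrightarrow> bij_betw h B (preset F t) \<Longrightarrow>
    \<exists>e\<in>E. pre e = B \<and> h e = t"
begin

lemma extension_in_cut:
  assumes "configuration C E G W" "B \<subseteq> cut C G W" "t \<in> T" "bij_betw h B (preset F t)"
  obtains e where "e \<in> E" "pre e = B" "h e = t"
  using extension assms cut_coset[OF assms(1)] coset_subset cut_cond by (metis subsetI subset_iff)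

lemma enabled_extension:
  assumes W: "fin_config W" and t: "t \<in> T" and en: "enabled F (mark C G h W) t"
  obtains e where "e \<in> E" "pre e \<subseteq> cut C G W" "h e = t"
proof -
  obtain g where g: "\<And>p. p \<in> preset F t \<Longrightarrow> g p \<in> cut C G W \<and> h (g p) = p"
    using enabled_cut_cover[OF en] by metis
  have "bij_betw h (g ` preset F t) (preset F t)"
    using g by (auto simp: bij_betw_def inj_on_def image_iff)
  moreover have "g ` preset F t \<subseteq> cut C G W" using g by blast
  ultimately show thesis using extension_in_cut W t that by metis
qed

lemma reachable_marked: "M \<in> reach T F M0 \<Longrightarrow> \<exists>W. fin_config W \<and> mark C G h W = M"
proof (induction rule: reach.induct)
  case init
  then show ?case using mark_empty unfolding configuration_def by blast
next
  case (step M t)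
  then obtain W where W: "fin_config W" "mark C G h W = M" by blast
  then obtain e where "e \<in> E" "pre e \<subseteq> cut C G W" "h e = t"
    using enabled_extension step by blast
  then show ?case using extension_config extension_mark W by metis
qed

end

section \<open>Isomorphic futures of configurations with equal markings\<close>

context net_unfolding
begin

definition cut_matching :: "'n set \<Rightarrow> 'n set \<Rightarrow> ('n \<times> 'n) set \<Rightarrow> bool" where
  "cut_matching X1 X2 S \<longleftrightarrow> fin_config X1 \<and> fin_config X2 \<and> S \<subseteq> cut C G X1 \<times> cut C G X2 \<and>
     (\<forall>b\<in>cut C G X1. \<exists>!b'. (b, b') \<in> S) \<and> (\<forall>b'\<in>cut C G X2. \<exists>!b. (b, b') \<in> S) \<and>
     (\<forall>(b, b')\<in>S. h b' = h b)"

text \<open>Starting from a label-preserving bijection S between the cuts of X1 and X2, the futures of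
  X1 and X2 are matched node by node: events match when their presets do, and the output
  conditions of matched events match when they carry the same place.\<close>
inductive matched :: "'n set \<Rightarrow> 'n set \<Rightarrow> ('n \<times> 'n) set \<Rightarrow> 'n \<Rightarrow> 'n \<Rightarrow> bool"
  for X1 X2 S where
  cut: "(b, b') \<in> S \<Longrightarrow> matched X1 X2 S b b'"
| event: "e \<in> E \<Longrightarrow> e' \<in> E \<Longrightarrow> e \<in> future C E G X1 \<Longrightarrow> e' \<in> future C E G X2 \<Longrightarrow> h e = h e' \<Longrightarrow>
    \<forall>b\<in>pre e. \<exists>b'\<in>pre e'. matched X1 X2 S b b' \<Longrightarrow> \<forall>b'\<in>pre e'. \<exists>b\<in>pre e. matched X1 X2 S b b' \<Longrightarrow>
    matched X1 X2 S e e'"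
| post: "matched X1 X2 S e e' \<Longrightarrow> e \<in> E \<Longrightarrow> b \<in> post e \<Longrightarrow> b' \<in> post e' \<Longrightarrow> h b = h b' \<Longrightarrow>
    matched X1 X2 S b b'"

definition matched_image :: "'n set \<Rightarrow> 'n set \<Rightarrow> ('n \<times> 'n) set \<Rightarrow> 'n set \<Rightarrow> 'n set" where
  "matched_image X1 X2 S A = {y. \<exists>x\<in>A. matched X1 X2 S x y}"

definition cuts_correspond :: "'n set \<Rightarrow> 'n set \<Rightarrow> ('n \<times> 'n) set \<Rightarrow> 'n set \<Rightarrow> 'n set \<Rightarrow> bool" where
  "cuts_correspond X1 X2 S Y1 Y2 \<longleftrightarrow>
     (\<forall>b\<in>cut C G Y1. \<exists>b'\<in>cut C G Y2. matched X1 X2 S b b') \<and>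
     (\<forall>b'\<in>cut C G Y2. \<exists>b\<in>cut C G Y1. matched X1 X2 S b b')"

definition matching_iso :: "'n set \<Rightarrow> 'n set \<Rightarrow> ('n \<times> 'n) set \<Rightarrow> 'n \<Rightarrow> 'n" where
  "matching_iso X1 X2 S x = (THE y. matched X1 X2 S x y)"

lemma cut_matching_converse: "cut_matching X1 X2 S \<Longrightarrow> cut_matching X2 X1 (S\<inverse>)"
  unfolding cut_matching_def by auto

lemma cut_matching_exists:
  assumes X1: "fin_config X1" and X2: "fin_config X2" and mark: "mark C G h X1 = mark C G h X2"
  obtains S where "cut_matching X1 X2 S"
proof -
  let ?fib = "\<lambda>X p. {c \<in> cut C G X. h c = p}"
  have card: "card (?fib X1 p) = card (?fib X2 p)" for p using mark unfolding mark_def by metis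
  have fin: "finite (?fib X p)" if "fin_config X" for X p using finite_cut[OF that] by simp
  have "\<exists>f. bij_betw f (?fib X1 p) (?fib X2 p)" for p
    by (rule finite_same_card_bij[OF fin[OF X1] fin[OF X2] card])
  then obtain f where f: "\<And>p. bij_betw (f p) (?fib X1 p) (?fib X2 p)" by metis
  define S where "S = {(b, f (h b) b) | b. b \<in> cut C G X1}"
  have img: "f (h b) b \<in> cut C G X2 \<and> h (f (h b) b) = h b" if "b \<in> cut C G X1" for b
    using f[of "h b"] that bij_betwE by blast
  have S_sub: "S \<subseteq> cut C G X1 \<times> cut C G X2" using img unfolding S_def by blast
  have S_label: "\<forall>(b, b')\<in>S. h b' = h b" using img unfolding S_def by blast
  have S_fun: "\<exists>!b'. (b, b') \<in> S" if "b \<in> cut C G X1" for b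
  proof (rule ex1I)
    show "(b, f (h b) b) \<in> S" using that unfolding S_def by blast
    show "b' = f (h b) b" if "(b, b') \<in> S" for b' using that unfolding S_def by simp
  qed
  have S_inj: "\<exists>!b. (b, b') \<in> S" if b': "b' \<in> cut C G X2" for b'
  proof -
    have surj: "f (h b') ` ?fib X1 (h b') = ?fib X2 (h b')" by (rule bij_betw_imp_surj_on[OF f])
    have "b' \<in> f (h b') ` ?fib X1 (h b')" unfolding surj using b' by simp
    then obtain b where b: "b' = f (h b') b" "b \<in> ?fib X1 (h b')" by (rule imageE)
    have "b2 = b" if "(b2, b') \<in> S" for b2
    proof -
      have b2: "b2 \<in> cut C G X1" "f (h b2) b2 = b'" using that unfolding S_def by auto
      then have "h b2 = h b'" using img by metis
      then have "b2 \<in> ?fib X1 (h b')" "f (h b') b2 = f (h b') b" using b b2 by auto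
      then show ?thesis using b(2) bij_betw_imp_inj_on[OF f[of "h b'"]] by (simp add: inj_on_def)
    qed
    moreover have "(b, b') \<in> S" using b unfolding S_def by auto
    ultimately show ?thesis by (rule ex1I[rotated])
  qed
  have "cut_matching X1 X2 S"
    unfolding cut_matching_def using X1 X2 S_sub S_label S_fun S_inj by (intro conjI ballI) auto
  then show thesis using that by blast
qed


context
  fixes X1 X2 S
  assumes S: "cut_matching X1 X2 S"
begin

lemma matching_configs: "fin_config X1" "fin_config X2"
  using S unfolding cut_matching_def by auto

lemma matching_total_left: "b \<in> cut C G X1 \<Longrightarrow> \<exists>b'\<in>cut C G X2. (b, b') \<in> S"
proof -
  assume "b \<in> cut C G X1"
  then have "\<exists>!b'. (b, b') \<in> S" using S unfolding cut_matching_def by blast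
  then obtain b' where "(b, b') \<in> S" by (rule ex1E)
  then show ?thesis using S unfolding cut_matching_def by blast
qed

lemma matching_total_right: "b' \<in> cut C G X2 \<Longrightarrow> \<exists>b\<in>cut C G X1. (b, b') \<in> S"
proof -
  assume "b' \<in> cut C G X2"
  then have "\<exists>!b. (b, b') \<in> S" using S unfolding cut_matching_def by blast
  then obtain b where "(b, b') \<in> S" by (rule ex1E)
  then show ?thesis using S unfolding cut_matching_def by blast
qed

lemma matched_props:
  "matched X1 X2 S x y \<Longrightarrow> x \<in> future C E G X1 \<and> y \<in> future C E G X2 \<and> h x = h y \<and>
     (x \<in> E \<longleftrightarrow> y \<in> E) \<and> (x \<in> C \<longleftrightarrow> y \<in> C)"
proof (induction rule: matched.induct)
  case (cut b b')
  then have b: "b \<in> cut C G X1" "b' \<in> cut C G X2" "h b' = h b"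
    using S unfolding cut_matching_def by auto
  then have "b \<in> future C E G X1" "b' \<in> future C E G X2" "b \<in> C" "b' \<in> C"
    using cut_subset_future cut_cond matching_configs by blast+
  then show ?case using b(3) conds_events_disjoint by auto
next
  case (event e e')
  then show ?case using conds_events_disjoint by auto
next
  case (post e e' b b')
  then have "e' \<in> E" by simp
  then have "b \<in> future C E G X1" "b' \<in> future C E G X2" "b \<in> C" "b' \<in> C"
    using post post_in_future matching_configs post_subset_conds by blast+
  then show ?case using post.hyps(5) conds_events_disjoint by auto
qed

lemma matched_condE:
  assumes "matched X1 X2 S b z" "b \<in> C"
  obtains "(b, z) \<in> S"
    | e e' where "matched X1 X2 S e e'" "e \<in> E" "b \<in> post e" "z \<in> post e'"
  using assms(1)
proof (cases rule: matched.cases)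
  case event
  then show thesis using assms(2) conds_events_disjoint by blast
qed (use that in blast)+

lemma matched_eventD:
  assumes "matched X1 X2 S e z" "e \<in> E"
  shows "z \<in> E \<and> (\<forall>b\<in>pre e. \<exists>b'\<in>pre z. matched X1 X2 S b b') \<and>
    (\<forall>b'\<in>pre z. \<exists>b\<in>pre e. matched X1 X2 S b b')"
  using assms(1)
proof (cases rule: matched.cases)
  case cut
  then have "e \<in> C" using S cut_cond matching_configs unfolding cut_matching_def by blast
  then show ?thesis using assms(2) conds_events_disjoint by blast
next
  case (post e0 e0')
  then have "e \<in> C" using post_subset_conds by blast
  then show ?thesis using assms(2) conds_events_disjoint by blast
qed auto

text \<open>A matched condition cannot be both in the cut and produced by a matched event, since
  producers of cut conditions lie outside the future.\<close>
lemma matched_functional: "matched X1 X2 S x y \<Longrightarrow> matched X1 X2 S x z \<Longrightarrow> y = z"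
proof (induction arbitrary: z rule: matched.induct)
  case (cut b b')
  have bcut: "b \<in> cut C G X1" using cut.hyps S unfolding cut_matching_def by blast
  show ?case
  proof (rule matched_condE[OF cut.prems])
    show "b \<in> C" using bcut cut_cond matching_configs by blast
    show "(b, z) \<in> S \<Longrightarrow> b' = z" using cut.hyps bcut S unfolding cut_matching_def by blast
    fix e e' assume "matched X1 X2 S e e'" "b \<in> post e"
    then show "b' = z"
      using matched_props cut_producer_not_future[OF _ bcut] matching_configs
      unfolding postset_def by blast
  qed
next
  case (event e e')
  have z: "z \<in> E" "\<forall>b\<in>pre e. \<exists>b'\<in>pre z. matched X1 X2 S b b'"
    "\<forall>b'\<in>pre z. \<exists>b\<in>pre e. matched X1 X2 S b b'"
    using matched_eventD[OF event.prems event.hyps(1)] by auto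
  have "pre e' = pre z"
  proof
    show "pre e' \<subseteq> pre z"
    proof
      fix b' assume "b' \<in> pre e'"
      then obtain b where "b \<in> pre e" "matched X1 X2 S b b'" "\<forall>z. matched X1 X2 S b z \<longrightarrow> b' = z"
        using event.IH(2) by blast
      then show "b' \<in> pre z" using z(2) by blast
    qed
    show "pre z \<subseteq> pre e'"
    proof
      fix b'' assume "b'' \<in> pre z"
      then obtain b where "b \<in> pre e" "matched X1 X2 S b b''" using z(3) by blast
      then show "b'' \<in> pre e'" using event.IH(1) by blast
    qed
  qed
  moreover have "h e' = h z" using matched_props[OF event.prems] event.hyps(5) by simp
  ultimately show ?case using events_unique event.hyps(2) z(1) by blast
next
  case (post e e' b b')
  have bC: "b \<in> C" using post_subset_conds post.hyps by blast
  show ?case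
  proof (rule matched_condE[OF post.prems bC])
    assume "(b, z) \<in> S"
    then have "b \<in> cut C G X1" using S unfolding cut_matching_def by blast
    then show "b' = z"
      using matched_props[OF post.hyps(1)] post.hyps(3) cut_producer_not_future matching_configs
      unfolding postset_def by blast
  next
    fix e0 e0' assume e0: "matched X1 X2 S e0 e0'" "e0 \<in> E" "b \<in> post e0" "z \<in> post e0'"
    then have "e0 = e" using unique_producer[OF bC] post.hyps(3) unfolding postset_def by blast
    then have "e0' = e'" using post.IH e0(1) by blast
    moreover have "e' \<in> E" using matched_props[OF post.hyps(1)] post.hyps(2) by blast
    moreover have "h z = h b'"
      using matched_props[OF post.prems] post.hyps(5) by simp
    ultimately show "b' = z"
      using post_bij[of e'] e0(4) post.hyps(4) unfolding bij_betw_def inj_on_def by blast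
  qed
qed

lemma matched_converse: "matched X1 X2 S x y \<Longrightarrow> matched X2 X1 (S\<inverse>) y x"
proof (induction rule: matched.induct)
  case (cut b b')
  then show ?case by (simp add: matched.cut)
next
  case (event e e')
  then show ?case by (intro matched.event) auto
next
  case (post e e' b b')
  have "e' \<in> E" using matched_props[OF post.hyps(1)] post.hyps(2) by blast
  then show ?case using matched.post[OF post.IH _ post.hyps(4,3)] post.hyps(5) by simp
qed

end

lemma matched_injective:
  "cut_matching X1 X2 S \<Longrightarrow> matched X1 X2 S x z \<Longrightarrow> matched X1 X2 S y z \<Longrightarrow> x = y"
  using matched_functional[OF cut_matching_converse] matched_converse by blast

context
  fixes X1 X2 S
  assumes S: "cut_matching X1 X2 S"
begin

lemma matched_event_exists:
  assumes Y2: "fin_config Y2" "X2 \<subseteq> Y2" and corr: "cuts_correspond X1 X2 S Y1 Y2"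
    and e: "e \<in> E" "e \<in> future C E G X1" and pre_cut: "pre e \<subseteq> cut C G Y1"
  obtains e' where "e' \<in> E" "pre e' \<subseteq> cut C G Y2" "matched X1 X2 S e e'"
proof -
  define B where "B = {b'. \<exists>b\<in>pre e. matched X1 X2 S b b'}"
  have B_cut: "B \<subseteq> cut C G Y2"
  proof
    fix b' assume "b' \<in> B"
    then obtain b where b: "b \<in> pre e" "matched X1 X2 S b b'" unfolding B_def by blast
    then obtain b'' where "b'' \<in> cut C G Y2" "matched X1 X2 S b b''"
      using corr pre_cut unfolding cuts_correspond_def by blast
    then show "b' \<in> cut C G Y2" using matched_functional[OF S b(2)] by simp
  qed
  have "bij_betw h B (preset F (h e))"
    unfolding bij_betw_def
  proof
    show "inj_on h B"
    proof (rule inj_onI)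
      fix x y assume "x \<in> B" "y \<in> B" "h x = h y"
      then obtain bx bz where b: "bx \<in> pre e" "matched X1 X2 S bx x" "bz \<in> pre e" "matched X1 X2 S bz y"
        unfolding B_def by blast
      then have "h bx = h bz" using matched_props[OF S] \<open>h x = h y\<close> by metis
      then have "bx = bz" using pre_bij[OF e(1)] b unfolding bij_betw_def inj_on_def by blast
      then show "x = y" using matched_functional[OF S] b by blast
    qed
    have "h ` B = h ` pre e"
    proof
      show "h ` B \<subseteq> h ` pre e"
      proof
        fix p assume "p \<in> h ` B"
        then obtain b b' where "b \<in> pre e" "matched X1 X2 S b b'" "p = h b'" unfolding B_def by blast
        then show "p \<in> h ` pre e" using matched_props[OF S] by (metis imageI)
      qed
      show "h ` pre e \<subseteq> h ` B"
      proof
        fix p assume "p \<in> h ` pre e"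
        then obtain b where b: "b \<in> pre e" "p = h b" by blast
        then obtain b' where "matched X1 X2 S b b'"
          using corr pre_cut unfolding cuts_correspond_def by blast
        then have "b' \<in> B" "h b' = p" using b matched_props[OF S] unfolding B_def by auto
        then show "p \<in> h ` B" by blast
      qed
    qed
    then show "h ` B = preset F (h e)" using pre_bij[OF e(1)] unfolding bij_betw_def by simp
  qed
  then obtain e' where e': "e' \<in> E" "pre e' = B" "h e' = h e"
    using extension_in_cut Y2 B_cut label_events e(1) by metis
  have "fin_config (insert e' Y2)" "e' \<notin> Y2"
    using extension_config extension_not_in Y2(1) e'(1) B_cut e'(2) by auto
  then have e'_future: "e' \<in> future C E G X2"
    using event_in_future Y2 e'(1) config_conflict_free matching_configs(2)[OF S] by blast
  have "matched X1 X2 S e e'"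
  proof (rule matched.event[OF e(1) e'(1) e(2) e'_future e'(3)[symmetric]])
    show "\<forall>b\<in>pre e. \<exists>b'\<in>pre e'. matched X1 X2 S b b'"
      using corr pre_cut e'(2) unfolding B_def cuts_correspond_def by blast
    show "\<forall>b'\<in>pre e'. \<exists>b\<in>pre e. matched X1 X2 S b b'" using e'(2) unfolding B_def by blast
  qed
  then show thesis using that e' B_cut by blast
qed

lemma cuts_correspond_extension:
  assumes Y: "fin_config Y1" "fin_config Y2" and corr: "cuts_correspond X1 X2 S Y1 Y2"
    and e: "e \<in> E" "pre e \<subseteq> cut C G Y1" and e': "e' \<in> E" "pre e' \<subseteq> cut C G Y2"
    and ee': "matched X1 X2 S e e'"
  shows "cuts_correspond X1 X2 S (insert e Y1) (insert e' Y2)"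
proof -
  have pre_match: "\<forall>b\<in>pre e. \<exists>b'\<in>pre e'. matched X1 X2 S b b'"
    "\<forall>b'\<in>pre e'. \<exists>b\<in>pre e. matched X1 X2 S b b'"
    using matched_eventD[OF S ee' e(1)] by auto
  have "h e = h e'" using matched_props[OF S ee'] by simp
  have post_match: "\<forall>b\<in>post e. \<exists>b'\<in>post e'. matched X1 X2 S b b'"
  proof
    fix b assume b: "b \<in> post e"
    then obtain b' where "b' \<in> post e'" "h b' = h b"
      using label_post[OF e(1) b e'(1)] \<open>h e = h e'\<close> by metis
    then show "\<exists>b'\<in>post e'. matched X1 X2 S b b'" using matched.post[OF ee' e(1) b] by metis
  qed
  have post_match': "\<forall>b'\<in>post e'. \<exists>b\<in>post e. matched X1 X2 S b b'"
  proof
    fix b' assume b': "b' \<in> post e'"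
    then obtain b where "b \<in> post e" "h b = h b'"
      using label_post[OF e'(1) b' e(1)] \<open>h e = h e'\<close> by metis
    then show "\<exists>b\<in>post e. matched X1 X2 S b b'" using matched.post[OF ee' e(1) _ b'] by metis
  qed
  show ?thesis
    unfolding cuts_correspond_def extension_cut[OF Y(1) e] extension_cut[OF Y(2) e']
  proof (intro conjI ballI)
    fix b assume b: "b \<in> cut C G Y1 - pre e \<union> post e"
    show "\<exists>b'\<in>cut C G Y2 - pre e' \<union> post e'. matched X1 X2 S b b'"
    proof (cases "b \<in> post e")
      case False
      then obtain b' where b': "b' \<in> cut C G Y2" "matched X1 X2 S b b'"
        using b corr unfolding cuts_correspond_def by blast
      have "b' \<notin> pre e'"
      proof
        assume "b' \<in> pre e'"
        then obtain b0 where "b0 \<in> pre e" "matched X1 X2 S b0 b'" using pre_match(2) by blast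
        then show False using matched_injective[OF S b'(2)] b False by blast
      qed
      then show ?thesis using b' by blast
    qed (use post_match in blast)
  next
    fix b' assume b': "b' \<in> cut C G Y2 - pre e' \<union> post e'"
    show "\<exists>b\<in>cut C G Y1 - pre e \<union> post e. matched X1 X2 S b b'"
    proof (cases "b' \<in> post e'")
      case False
      then obtain b where b: "b \<in> cut C G Y1" "matched X1 X2 S b b'"
        using b' corr unfolding cuts_correspond_def by blast
      have "b \<notin> pre e"
      proof
        assume "b \<in> pre e"
        then obtain b0 where "b0 \<in> pre e'" "matched X1 X2 S b b0" using pre_match(1) by blast
        then show False using matched_functional[OF S b(2)] b' False by blast
      qed
      then show ?thesis using b by blast
    qed (use post_match' in blast)
  qed
qed

lemma cuts_correspond_initial: "cuts_correspond X1 X2 S X1 X2"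
  using matching_total_left[OF S] matching_total_right[OF S] matched.cut
  unfolding cuts_correspond_def by metis

lemma matching_extends:
  assumes "finite A" "A \<inter> X1 = {}" "fin_config (X1 \<union> A)"
  shows "(\<forall>x\<in>A. \<exists>y. matched X1 X2 S x y) \<and> fin_config (X2 \<union> matched_image X1 X2 S A) \<and>
    matched_image X1 X2 S A \<inter> X2 = {} \<and>
    cuts_correspond X1 X2 S (X1 \<union> A) (X2 \<union> matched_image X1 X2 S A)"
  using assms
proof (induction "card A" arbitrary: A)
  case 0
  then have "A = {}" by simp
  then show ?case using matching_configs[OF S] cuts_correspond_initial unfolding matched_image_def by simp
next
  case (Suc n)
  have W: "fin_config (X1 \<union> A)" using Suc.prems by blast
  have "A \<noteq> {}" "A \<subseteq> C \<union> E" using Suc.hyps(2) W unfolding configuration_def by auto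
  then obtain e where e: "e \<in> A" "\<forall>e'\<in>A. (e, e') \<notin> G\<^sup>+"
    using exists_maximal Suc.prems(1) by blast
  have eE: "e \<in> E" "e \<notin> X1" using e(1) W Suc.prems(2) unfolding configuration_def by auto
  have "(e, x) \<notin> G\<^sup>+" if "x \<in> X1" for x
    using that eE matching_configs(1)[OF S] unfolding configuration_def by blast
  then have max: "\<forall>x\<in>X1 \<union> A. (e, x) \<notin> G\<^sup>+" using e(2) by blast
  define A0 where "A0 = A - {e}"
  have A: "A = insert e A0" "X1 \<union> A0 = X1 \<union> A - {e}" using e(1) eE(2) unfolding A0_def by auto
  have Y1: "fin_config (X1 \<union> A0)" and pre_cut: "pre e \<subseteq> cut C G (X1 \<union> A0)"
    using remove_maximal[OF W _ max] e(1) A(2) by auto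
  define Y2 where "Y2 = X2 \<union> matched_image X1 X2 S A0"
  have "card A0 = n" using Suc.hyps(2) Suc.prems(1) e(1) unfolding A0_def by simp
  then have IH: "(\<forall>x\<in>A0. \<exists>y. matched X1 X2 S x y) \<and> fin_config Y2 \<and>
      matched_image X1 X2 S A0 \<inter> X2 = {} \<and> cuts_correspond X1 X2 S (X1 \<union> A0) Y2"
    using Suc.hyps(1)[of A0] Suc.prems(1,2) Y1 unfolding A0_def Y2_def by blast
  have "\<not> conflict C G e x" if "x \<in> X1" for x using W e(1) that config_conflict_free by blast
  then have "e \<in> future C E G X1" using event_in_future matching_configs(1)[OF S] eE by blast
  then obtain e' where e': "e' \<in> E" "pre e' \<subseteq> cut C G Y2" "matched X1 X2 S e e'"
    using matched_event_exists[of Y2 "X1 \<union> A0" e] IH eE(1) pre_cut unfolding Y2_def by blast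
  have image: "matched_image X1 X2 S A = insert e' (matched_image X1 X2 S A0)"
    using matched_functional[OF S e'(3)] e'(3) A(1) unfolding matched_image_def by blast
  have Y2': "X2 \<union> matched_image X1 X2 S A = insert e' Y2" using image unfolding Y2_def by auto
  have Y1': "X1 \<union> A = insert e (X1 \<union> A0)" using A(1) by auto
  have "e' \<notin> X2" using matched_props[OF S e'(3)] unfolding future_iff by blast
  have "\<forall>x\<in>A. \<exists>y. matched X1 X2 S x y" using IH e'(3) A(1) by blast
  moreover have "fin_config (X2 \<union> matched_image X1 X2 S A)"
    unfolding Y2' using extension_config IH e'(1,2) by blast
  moreover have "matched_image X1 X2 S A \<inter> X2 = {}"
    unfolding image using IH \<open>e' \<notin> X2\<close> by blast
  moreover have "cuts_correspond X1 X2 S (X1 \<union> A) (X2 \<union> matched_image X1 X2 S A)"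
    unfolding Y1' Y2' using cuts_correspond_extension Y1 IH eE(1) pre_cut e' by blast
  ultimately show ?case by blast
qed

lemma matched_total_event:
  assumes x: "x \<in> future C E G X1" "x \<in> E"
  shows "\<exists>y. matched X1 X2 S x y"
proof -
  have X1: "fin_config X1" using matching_configs[OF S] by blast
  let ?W = "events_below (insert x X1)"
  have x_free: "\<not> conflict C G x b" "\<not> conflict C G b x" if "b \<in> insert x X1" for b
  proof -
    show "\<not> conflict C G x b"
      using that x no_self_conflict unfolding future_iff by (cases "b = x") auto
    then show "\<not> conflict C G b x" using conflict_sym[of C G b x] by blast
  qed
  have "\<not> conflict C G a b" if "a \<in> insert x X1" "b \<in> insert x X1" for a b
  proof (cases "a = x \<or> b = x")
    case True
    then show ?thesis using x_free that by blast
  next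
    case False
    then show ?thesis using that X1 config_conflict_free by blast
  qed
  moreover have X1E: "X1 \<subseteq> E" using X1 unfolding configuration_def by blast
  then have "insert x X1 \<subseteq> C \<union> E" using x(2) by blast
  ultimately have W: "fin_config ?W" using events_below_config X1 by blast
  define A where "A = ?W - X1"
  have "X1 \<subseteq> ?W" "x \<in> ?W" using X1E x(2) unfolding events_below_def by blast+
  then have A: "X1 \<union> A = ?W" "finite A" "A \<inter> X1 = {}" "x \<in> A"
    using W x(1) unfolding A_def future_iff by auto
  then have "\<forall>x\<in>A. \<exists>y. matched X1 X2 S x y" using matching_extends[of A] W by simp
  then show ?thesis using A(4) by blast
qed

lemma matched_total: "x \<in> future C E G X1 \<Longrightarrow> \<exists>y. matched X1 X2 S x y"
proof -
  assume x: "x \<in> future C E G X1"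
  then consider "x \<in> E" | "x \<in> C" unfolding future_iff by blast
  then show ?thesis
  proof cases
    case 1
    then show ?thesis using matched_total_event x by blast
  next
    case xC: 2
    show ?thesis
    proof (cases "\<exists>w. (w, x) \<in> G \<and> w \<notin> X1")
      case False
      then have "x \<in> cut C G X1" using future_cond_in_cut x xC by blast
      then show ?thesis using matching_total_left[OF S] matched.cut by blast
    next
      case True
      then obtain w where w: "(w, x) \<in> G" "w \<notin> X1" by blast
      then have "w \<in> future C E G X1" "w \<in> E"
        using producer_in_future matching_configs[OF S] x xC arc_to_cond by blast+
      then obtain w' where ww': "matched X1 X2 S w w'" using matched_total_event by blast
      then have "w' \<in> E" "h w' = h w" using matched_props[OF S ww'] \<open>w \<in> E\<close> by auto
      moreover have "x \<in> post w" using w unfolding postset_def by simp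
      ultimately obtain x' where "x' \<in> post w'" "h x' = h x" using label_post \<open>w \<in> E\<close> by metis
      then show ?thesis using matched.post[OF ww' \<open>w \<in> E\<close> \<open>x \<in> post w\<close>] by metis
    qed
  qed
qed

lemma matching_iso_eq: "matched X1 X2 S x y \<Longrightarrow> matching_iso X1 X2 S x = y"
  unfolding matching_iso_def using matched_functional[OF S] by (intro the_equality) blast+

lemma matched_iso: "x \<in> future C E G X1 \<Longrightarrow> matched X1 X2 S x (matching_iso X1 X2 S x)"
  using matched_total matching_iso_eq by blast

lemma mark_eq_if_cuts_correspond:
  assumes corr: "cuts_correspond X1 X2 S Y1 Y2"
  shows "mark C G h Y1 = mark C G h Y2"
proof (rule ext)
  fix p
  let ?I = "matching_iso X1 X2 S"
  have fw: "?I b \<in> cut C G Y2 \<and> matched X1 X2 S b (?I b)" if b: "b \<in> cut C G Y1" for b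
  proof -
    obtain b' where b': "b' \<in> cut C G Y2" "matched X1 X2 S b b'"
      using corr b unfolding cuts_correspond_def by blast
    moreover have "?I b = b'" using b'(2) by (rule matching_iso_eq)
    ultimately show ?thesis by simp
  qed
  have "bij_betw ?I {c \<in> cut C G Y1. h c = p} {c \<in> cut C G Y2. h c = p}"
    unfolding bij_betw_def
  proof
    show "inj_on ?I {c \<in> cut C G Y1. h c = p}"
    proof (rule inj_onI)
      fix x y assume xy: "x \<in> {c \<in> cut C G Y1. h c = p}" "y \<in> {c \<in> cut C G Y1. h c = p}" "?I x = ?I y"
      have "matched X1 X2 S x (?I x)" "matched X1 X2 S y (?I y)" using fw[of x] fw[of y] xy(1,2) by auto
      then have "matched X1 X2 S x (?I x)" "matched X1 X2 S y (?I x)" using xy(3) by simp_all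
      then show "x = y" by (rule matched_injective[OF S])
    qed
    show "?I ` {c \<in> cut C G Y1. h c = p} = {c \<in> cut C G Y2. h c = p}"
    proof
      show "?I ` {c \<in> cut C G Y1. h c = p} \<subseteq> {c \<in> cut C G Y2. h c = p}"
      proof
        fix y assume "y \<in> ?I ` {c \<in> cut C G Y1. h c = p}"
        then obtain b where b: "b \<in> cut C G Y1" "h b = p" "y = ?I b" by blast
        then have "y \<in> cut C G Y2" "matched X1 X2 S b y" using fw by auto
        then show "y \<in> {c \<in> cut C G Y2. h c = p}" using matched_props[OF S \<open>matched X1 X2 S b y\<close>] b(2) by simp
      qed
      show "{c \<in> cut C G Y2. h c = p} \<subseteq> ?I ` {c \<in> cut C G Y1. h c = p}"
      proof
        fix b' assume b': "b' \<in> {c \<in> cut C G Y2. h c = p}"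
        then obtain b where b: "b \<in> cut C G Y1" "matched X1 X2 S b b'"
          using corr unfolding cuts_correspond_def by blast
        then have "?I b = b'" "h b = p" using matching_iso_eq[OF b(2)] matched_props[OF S b(2)] b' by auto
        then show "b' \<in> ?I ` {c \<in> cut C G Y1. h c = p}" using b(1) by blast
      qed
    qed
  qed
  then show "mark C G h Y1 p = mark C G h Y2 p" unfolding mark_def by (rule bij_betw_same_card)
qed

lemma matching_iso_extension:
  assumes "finite A" "A \<inter> X1 = {}" "fin_config (X1 \<union> A)"
  shows "fin_config (X2 \<union> matching_iso X1 X2 S ` A)" "matching_iso X1 X2 S ` A \<inter> X2 = {}"
    "mark C G h (X1 \<union> A) = mark C G h (X2 \<union> matching_iso X1 X2 S ` A)"
proof -
  note ext = matching_extends[OF assms]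
  have "matching_iso X1 X2 S ` A = matched_image X1 X2 S A"
    using ext matching_iso_eq unfolding matched_image_def by force
  then show "fin_config (X2 \<union> matching_iso X1 X2 S ` A)" "matching_iso X1 X2 S ` A \<inter> X2 = {}"
    "mark C G h (X1 \<union> A) = mark C G h (X2 \<union> matching_iso X1 X2 S ` A)"
    using ext mark_eq_if_cuts_correspond by auto
qed

lemma matched_arc:
  assumes xx': "matched X1 X2 S x x'" and yy': "matched X1 X2 S y y'" and xy: "(x, y) \<in> G"
  shows "(x', y') \<in> G"
proof (cases "y \<in> E")
  case True
  have "x \<in> pre y" using xy unfolding preset_def by simp
  then obtain b' where b': "b' \<in> pre y'" "matched X1 X2 S x b'"
    using matched_eventD[OF S yy' True] by blast
  have "b' = x'" using matched_functional[OF S b'(2) xx'] .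
  then show ?thesis using b'(1) unfolding preset_def by simp
next
  case False
  then have yC: "y \<in> C" using arc_cases[OF xy] by blast
  show ?thesis
  proof (rule matched_condE[OF S yy' yC])
    assume "(y, y') \<in> S"
    then have "y \<in> cut C G X1" using S unfolding cut_matching_def by blast
    then have "x \<notin> future C E G X1"
      using cut_producer_not_future[OF _ _ xy] matching_configs(1)[OF S] by blast
    then show ?thesis using matched_props[OF S xx'] by blast
  next
    fix e e' assume ee': "matched X1 X2 S e e'" "e \<in> E" "y \<in> post e" "y' \<in> post e'"
    have "(e, y) \<in> G" using ee'(3) unfolding postset_def by simp
    then have "e = x" using unique_producer[OF yC _ xy] by blast
    then have "e' = x'" using matched_functional[OF S] ee'(1) xx' by blast
    then show ?thesis using ee'(4) unfolding postset_def by simp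
  qed
qed

end

lemma matching_future_iso:
  assumes S: "cut_matching X1 X2 S"
  shows "future_iso C E G h X1 X2 (matching_iso X1 X2 S)"
proof -
  let ?I = "matching_iso X1 X2 S"
  have S': "cut_matching X2 X1 (S\<inverse>)" using cut_matching_converse[OF S] .
  have I: "matched X1 X2 S x (?I x)" if "x \<in> future C E G X1" for x using matched_iso[OF S that] .
  have "inj_on ?I (future C E G X1)" using I matched_injective[OF S] by (metis inj_onI)
  moreover have "?I ` future C E G X1 = future C E G X2"
  proof
    show "?I ` future C E G X1 \<subseteq> future C E G X2" using I matched_props[OF S] by blast
    show "future C E G X2 \<subseteq> ?I ` future C E G X1"
    proof
      fix y assume "y \<in> future C E G X2"
      then obtain x where "matched X2 X1 (S\<inverse>) y x" using matched_total[OF S'] by blast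
      then have "matched X1 X2 S x y" using matched_converse[OF S'] by simp
      then show "y \<in> ?I ` future C E G X1"
        using matched_props[OF S] matching_iso_eq[OF S] by (metis imageI)
    qed
  qed
  moreover have "(x, y) \<in> G \<longleftrightarrow> (?I x, ?I y) \<in> G"
    if "x \<in> future C E G X1" "y \<in> future C E G X1" for x y
    using matched_arc[OF S I I] matched_arc[OF S' matched_converse[OF S I] matched_converse[OF S I]]
      that by auto
  moreover have "(x \<in> E \<longleftrightarrow> ?I x \<in> E) \<and> h (?I x) = h x" if "x \<in> future C E G X1" for x
    using matched_props[OF S I[OF that]] by simp
  ultimately show ?thesis unfolding future_iso_def bij_betw_def by blast
qed

end

section \<open>The procedure CheckByCuts\<close>

context branching_proc
begin

lemma tar_if_coset_covers_preset:
  assumes e1: "e1 \<in> E" and t2: "t2 \<in> T"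
    and D: "finite D" "D \<subseteq> C" "coset C G D" "\<forall>d\<in>D. d \<in> post e1 \<or> co C G d e1"
    and cover: "preset F t2 \<subseteq> h ` D"
  shows "tar T F M0 (h e1) t2"
proof -
  have post_or_co: "(e1, d) \<in> G \<or> co C G d e1" if "d \<in> D" for d
    using D(4) that unfolding postset_def by blast
  have d_not_before_e1: "(d, e1) \<notin> G\<^sup>+" if "d \<in> D" for d
    using post_or_co[OF that] acyclic unfolding co_def by (meson trancl_into_trancl2)
  have no_conflict: "\<not> conflict C G x y" if "x \<in> insert e1 D" "y \<in> insert e1 D" for x y
  proof -
    have "\<not> conflict C G e1 d" if "d \<in> D" for d
    proof
      assume "conflict C G e1 d"
      then have "conflict C G d e1" by (rule conflict_sym)
      moreover have "\<not> conflict C G e1 e1" using no_self_conflict e1 by blast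
      ultimately show False
        using post_or_co[OF that] conflict_producer that D(2) unfolding co_def by blast
    qed
    moreover have "\<not> conflict C G x y" if "x \<in> D" "y \<in> D" for x y
      using that D(2,3) no_self_conflict unfolding coset_def co_def by (cases "x = y") auto
    moreover have "\<not> conflict C G e1 e1" using no_self_conflict e1 by blast
    ultimately show ?thesis
      using that conflict_sym[of C G x y] by (cases "x = e1"; cases "y = e1") auto
  qed
  define W where "W = events_below (insert e1 D)"
  have W: "fin_config W"
    unfolding W_def using events_below_config no_conflict D(1,2) e1 by auto
  have e1W: "e1 \<in> W" using e1 unfolding W_def events_below_def by blast
  have max: "\<forall>u\<in>W. (e1, u) \<notin> G\<^sup>+"
  proof (intro ballI notI)
    fix u assume u: "u \<in> W" and e1u: "(e1, u) \<in> G\<^sup>+"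
    then obtain y where y: "y \<in> insert e1 D" "(u, y) \<in> G\<^sup>*" unfolding W_def events_below_def by blast
    have uE: "u \<in> E" using u unfolding W_def events_below_def by blast
    show False
    proof (cases "y = e1")
      case True
      then show False using e1u y(2) acyclic by (meson trancl_rtrancl_trancl)
    next
      case False
      then have yD: "y \<in> D" using y(1) by blast
      then consider "(e1, y) \<in> G" | "co C G y e1" using post_or_co by blast
      then show False
      proof cases
        case 1
        obtain w where "(w, y) \<in> G" "(u, w) \<in> G\<^sup>*"
          using rtrancl_event_to_cond y(2) uE yD D(2) by blast
        then have "(u, e1) \<in> G\<^sup>*" using unique_producer[OF _ 1] yD D(2) by blast
        then show False using e1u acyclic by (meson trancl_rtrancl_trancl)
      next
        case 2
        then show False using e1u y(2) unfolding co_def by (meson trancl_rtrancl_trancl)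
      qed
    qed
  qed
  have "(c, y) \<notin> G\<^sup>+" if "c \<in> D" "y \<in> insert e1 D" for c y
    using that d_not_before_e1 D(3) acyclic unfolding coset_def co_def
    by (cases "y = e1"; cases "y = c") auto
  then have "\<forall>c\<in>D. \<forall>y\<in>insert e1 D. (c, y) \<notin> G\<^sup>+" by blast
  then have D_cut: "D \<subseteq> cut C G W"
    unfolding W_def using conds_in_cut_events_below D(2) by blast
  have W': "fin_config (W - {e1})" and pre_cut: "pre e1 \<subseteq> cut C G (W - {e1})"
    using remove_maximal[OF W e1W max] by auto
  have "mark C G h W = fire F (mark C G h (W - {e1})) (h e1)"
    using extension_mark[OF W' e1 pre_cut] e1W by (simp add: insert_absorb)
  moreover have "enabled F (mark C G h W) t2"
    unfolding enabled_def using cover D_cut mark_pos[OF W] by blast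
  ultimately show ?thesis
    unfolding tar_def
    using mark_reachable[OF W'] enabled_if_pre_in_cut[OF W' e1 pre_cut] label_events[OF e1] t2
    by auto
qed

lemma tar_if_check_by_cuts:
  assumes t2: "t2 \<in> T"
    and check: "check_by_cuts F (trunc_conds K) (trunc_events K) (trunc_arcs K) h t1 t2"
  shows "tar T F M0 t1 t2"
proof -
  obtain e1 X where e1: "e1 \<in> trunc_events K" "h e1 = t1"
    and X: "X \<in> cuts_of (trunc_conds K) (trunc_arcs K) (B_prec F (trunc_conds K) (trunc_arcs K) h e1 t2)"
    and cover: "preset F t2 \<subseteq> h ` X"
    using check unfolding check_by_cuts_def by blast
  have e1E: "e1 \<in> E" using e1(1) unfolding trunc_events_def by blast
  obtain D where D: "D \<subseteq> X" "finite D" "preset F t2 = h ` D"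
    using finite_subset_image[OF finite_net_preset[OF t2] cover] by blast
  have "postset (trunc_arcs K) e1 \<subseteq> trunc_conds K"
    using trunc_postset[OF e1(1)] post_subset_conds[OF e1E] conds_events_disjoint
    unfolding trunc_arcs_def trunc_events_def postset_def by blast
  then have B_prec: "B_prec F (trunc_conds K) (trunc_arcs K) h e1 t2 \<subseteq> trunc_conds K"
    unfolding B_prec_def by blast
  have X_sub: "X \<subseteq> B_prec F (trunc_conds K) (trunc_arcs K) h e1 t2"
    and X_coset: "coset (trunc_conds K) (trunc_arcs K) X"
    using X unfolding cuts_of_def by blast+
  have DC: "D \<subseteq> trunc_conds K" using D(1) X_sub B_prec by blast
  then have DN: "D \<subseteq> trunc_conds K \<union> trunc_events K" by blast
  have "coset (trunc_conds K) (trunc_arcs K) D" using coset_subset[OF X_coset D(1)] .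
  then have "coset C G D" using trunc_coset_iff[OF DN] by blast
  moreover have "d \<in> post e1 \<or> co C G d e1" if d: "d \<in> D" for d
  proof -
    have "d \<in> postset (trunc_arcs K) e1 \<or> co (trunc_conds K) (trunc_arcs K) d e1"
      using d D(1) X_sub unfolding B_prec_def by blast
    moreover have "d \<in> trunc_conds K \<union> trunc_events K" "e1 \<in> trunc_conds K \<union> trunc_events K"
      using d DN e1(1) by blast+
    ultimately show ?thesis using trunc_postset[OF e1(1)] trunc_co_iff by blast
  qed
  moreover have "D \<subseteq> C" using DC unfolding trunc_conds_def by blast
  ultimately show ?thesis
    using tar_if_coset_covers_preset[OF e1E t2 D(2)] D(3) e1(2) by blast
qed

end

context net_unfolding
begin

lemma local_config_fin_config: "e \<in> E \<Longrightarrow> fin_config (local_config E G e)"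
  unfolding local_config_eq using events_below_config no_self_conflict by auto

text \<open>The part of Z beyond the local configuration of e is transported along the isomorphism of
  futures to the smaller local configuration of the witness e'; the adequate order ranks the
  result below Z.\<close>
lemma cutoff_config_not_minimal:
  assumes lt: "adequate_order C E G h lt" and Z: "fin_config Z" and e: "e \<in> Z" "cutoff C E G h lt e"
  obtains Y where "fin_config Y" "mark C G h Y = mark C G h Z" "lt Y Z"
proof -
  obtain e' where e': "e \<in> E" "e' \<in> E"
    "mark C G h (local_config E G e') = mark C G h (local_config E G e)"
    "lt (local_config E G e') (local_config E G e)"
    using e(2) unfolding cutoff_def by blast
  define L where "L = local_config E G e"
  define L' where "L' = local_config E G e'"
  have L: "fin_config L" "fin_config L'"
    unfolding L_def L'_def using local_config_fin_config e' by blast+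
  have LZ: "L \<subseteq> Z" using Z e unfolding L_def local_config_def by (blast intro: config_closed)
  obtain S where S: "cut_matching L L' S" using cut_matching_exists L e'(3) L_def L'_def by metis
  define A where "A = Z - L"
  have A: "finite A" "A \<inter> L = {}" "L \<union> A = Z" using Z LZ unfolding A_def by auto
  let ?I = "matching_iso L L' S" and ?J = "matching_iso L' L (S\<inverse>)"
  have Y: "fin_config (L' \<union> ?I ` A)" "?I ` A \<inter> L' = {}" "mark C G h Z = mark C G h (L' \<union> ?I ` A)"
    using matching_iso_extension[OF S A(1,2)] A(3) Z by auto
  have inverse: "?J (?I x) = x" if x: "x \<in> A" for x
  proof -
    have xZ: "x \<in> Z" "x \<notin> L" using x unfolding A_def by auto
    then have "x \<in> E" using Z unfolding configuration_def by blast
    moreover have "\<forall>e\<in>L. \<not> conflict C G x e" using config_conflict_free[of Z x] Z xZ LZ by blast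
    ultimately have "x \<in> future C E G L" using event_in_future[OF _ _ xZ(2)] L(1) by blast
    then have "matched L L' S x (?I x)" by (rule matched_iso[OF S])
    then have "matched L' L (S\<inverse>) (?I x) x" by (rule matched_converse[OF S])
    then show ?thesis by (rule matching_iso_eq[OF cut_matching_converse[OF S]])
  qed
  have "?J ` ?I ` A = (\<lambda>x. ?J (?I x)) ` A" by (rule image_image)
  also have "\<dots> = A" using inverse by simp
  finally have J_I: "?J ` ?I ` A = A" .
  have adequate_ext: "\<And>X1 X2 I A. fin_config X1 \<and> fin_config X2 \<and> lt X1 X2 \<and>
      mark C G h X1 = mark C G h X2 \<and> future_iso C E G h X1 X2 I \<and> A \<inter> X1 = {} \<and>
      fin_config (X1 \<union> A) \<Longrightarrow> lt (X1 \<union> A) (X2 \<union> I ` A)"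
    using lt unfolding adequate_order_def Let_def by blast
  have "lt (L' \<union> ?I ` A) (L \<union> ?J ` ?I ` A)"
    using adequate_ext[of L' L ?J "?I ` A"] L Y(1,2) e'(3,4)
      matching_future_iso[OF cut_matching_converse[OF S]]
    unfolding L_def L'_def by blast
  then show thesis using that[OF Y(1) Y(3)[symmetric]] J_I A(3) by simp
qed

lemma reachable_marked_cutoff_free:
  assumes lt: "adequate_order C E G h lt" and M: "M \<in> reach T F M0"
  obtains X where "fin_config X" "mark C G h X = M" "\<forall>e\<in>X. \<not> cutoff C E G h lt e"
proof -
  have wf: "wfp (\<lambda>X Y. fin_config X \<and> fin_config Y \<and> lt X Y)"
    using lt unfolding adequate_order_def Let_def by blast
  define Q where "Q = {X. fin_config X \<and> mark C G h X = M}"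
  obtain X0 where "X0 \<in> Q" using reachable_marked[OF M] unfolding Q_def by blast
  then obtain Z where "Z \<in> Q" "\<forall>Y. fin_config Y \<and> fin_config Z \<and> lt Y Z \<longrightarrow> Y \<notin> Q"
    using wf unfolding wfp_eq_minimal by blast
  then have Z: "fin_config Z" "mark C G h Z = M"
    and min: "\<And>Y. fin_config Y \<Longrightarrow> lt Y Z \<Longrightarrow> mark C G h Y \<noteq> M"
    unfolding Q_def by auto
  have "\<not> cutoff C E G h lt e" if "e \<in> Z" for e
    using cutoff_config_not_minimal[OF lt Z(1) that] min Z(2) by metis
  then show thesis using that Z by blast
qed

lemma check_by_cuts_if_tar:
  assumes lt: "adequate_order C E G h lt" and t1: "t1 \<in> T" and tar: "tar T F M0 t1 t2"
  defines "K \<equiv> {e. cutoff C E G h lt e}"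
  shows "check_by_cuts F (trunc_conds K) (trunc_events K) (trunc_arcs K) h t1 t2"
proof -
  obtain Ms where Ms: "Ms \<in> reach T F M0" "enabled F Ms t1" "enabled F (fire F Ms t1) t2"
    using tar unfolding tar_def by blast
  obtain X where X: "fin_config X" "mark C G h X = Ms" "\<forall>e\<in>X. \<not> cutoff C E G h lt e"
    using reachable_marked_cutoff_free[OF lt Ms(1)] by blast
  obtain e1 where e1: "e1 \<in> E" "pre e1 \<subseteq> cut C G X" "h e1 = t1"
    using enabled_extension[OF X(1) t1] Ms(2) X(2) by metis
  define W where "W = insert e1 X"
  have W: "fin_config W" using extension_config[OF X(1) e1(1,2)] unfolding W_def .
  have e1W: "e1 \<in> W" unfolding W_def by blast
  have max: "\<forall>x\<in>W. (e1, x) \<notin> G\<^sup>+"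
    using extension_not_in[OF X(1) e1(1,2)] X(1) e1(1) acyclic
    unfolding W_def configuration_def by blast
  have "K \<subseteq> E" unfolding K_def cutoff_def by blast
  moreover have "W \<inter> K \<subseteq> {e1}" using X(3) unfolding W_def K_def by blast
  ultimately have W_trunc: "W \<subseteq> trunc_events K"
    using config_subset_trunc_events W max by blast
  have en2: "enabled F (mark C G h W) t2"
    using Ms(3) extension_mark[OF X(1) e1(1,2)] X(2) e1(3) unfolding W_def by simp
  define D where "D = {c \<in> cut C G W. h c \<in> preset F t2}"
  have D_trunc: "D \<subseteq> trunc_conds K"
    using cut_subset_trunc_conds W W_trunc unfolding D_def by blast
  have e1_trunc: "e1 \<in> trunc_events K" using W_trunc e1W by blast
  have "D \<subseteq> B_prec F (trunc_conds K) (trunc_arcs K) h e1 t2"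
  proof
    fix c assume c: "c \<in> D"
    show "c \<in> B_prec F (trunc_conds K) (trunc_arcs K) h e1 t2"
    proof (cases "c \<in> post e1")
      case True
      then show ?thesis using trunc_postset[OF e1_trunc] unfolding B_prec_def by blast
    next
      case False
      then have "co C G c e1" using cut_co_maximal_event W e1W max c unfolding D_def by blast
      then show ?thesis
        using trunc_co_iff D_trunc e1_trunc c unfolding B_prec_def D_def by blast
    qed
  qed
  moreover have "coset (trunc_conds K) (trunc_arcs K) D"
  proof -
    have "D \<subseteq> cut C G W" unfolding D_def by blast
    with W have "coset C G D" using coset_subset cut_coset by blast
    moreover have "D \<subseteq> trunc_conds K \<union> trunc_events K" using D_trunc by blast
    ultimately show ?thesis using trunc_coset_iff by blast
  qed
  ultimately obtain X' where X': "X' \<in> cuts_of (trunc_conds K) (trunc_arcs K)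
      (B_prec F (trunc_conds K) (trunc_arcs K) h e1 t2)" "D \<subseteq> X'"
    by (rule coset_extends_to_cut)
  have "preset F t2 \<subseteq> h ` X'"
    using enabled_cut_cover[OF en2] X'(2) unfolding D_def by blast
  then show ?thesis unfolding check_by_cuts_def using e1_trunc e1(3) X'(1) by blast
qed

end

theorem proposition3:
  fixes P T :: "'a set" and F :: "('a \<times> 'a) set" and M0 :: "'a \<Rightarrow> nat"
    and C E :: "'n set" and G :: "('n \<times> 'n) set" and h :: "'n \<Rightarrow> 'a"
  assumes "net_system P T F M0"
    and "complete_prefix P T F M0 C E G h"
    and "t1 \<in> T" and "t2 \<in> T"
  shows "check_by_cuts F C E G h t1 t2 \<longleftrightarrow> tar T F M0 t1 t2"
proof -
  obtain CU EU GU lt where unf: "is_unfolding P T F M0 CU EU GU h"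
    and lt: "adequate_order CU EU GU h lt"
    and prefix: "E = {e \<in> EU. \<not> (\<exists>e'. cutoff CU EU GU h lt e' \<and> (e', e) \<in> GU\<^sup>+)}"
      "C = {c \<in> CU. \<forall>e. (e, c) \<in> GU \<longrightarrow> e \<in> E}" "G = GU \<inter> ((C \<union> E) \<times> (C \<union> E))"
    using assms(2) unfolding complete_prefix_def by blast
  interpret U: net_unfolding P T F M0 CU EU GU h
    using assms(1) unf by unfold_locales (auto simp: is_unfolding_def)
  define K where "K = {e. cutoff CU EU GU h lt e}"
  have "E = U.trunc_events K" using prefix(1) unfolding K_def U.trunc_events_def by simp
  moreover have "C = U.trunc_conds K" using prefix(2) calculation unfolding U.trunc_conds_def by simp
  moreover have "G = U.trunc_arcs K" using prefix(3) calculation unfolding U.trunc_arcs_def by simp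
  ultimately show ?thesis
    using U.tar_if_check_by_cuts[OF assms(4)] U.check_by_cuts_if_tar[OF lt assms(3)]
    unfolding K_def by blast
qed

end
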